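(* Consider the consumer-software model described in the context, with a fixed price vector $p=(p_1^{<m},p_1^{\ge m},p_2,p_S)$ and a user of type $\tau=(n_a,\delta,\gamma,v)$. (1) If the user buys the upgrade (and, if not yet owned, the base product) in some timestep $n\ge m$, then the optimal such strategy buys as soon as possible, i.e. in timestep $\max(n_a,m)$, and does not subscribe in any timestep $n\ge m$. (2) If the user has ownership vector $o$ and does not buy anything in timesteps $n\ge m$, then for the optimal such strategy there is a timestep $n_2^{o,\tau}\ge m$ such that he subscribes in every timestep $n$ with $m\le n<n_2^{o,\tau}$ in which he has demand $d=1$, and subscribes in no timestep $n\ge n_2^{o,\tau}$; moreover $n_2^{o,\tau}$ is the smallest $n\ge m$ with $v<\frac{p_S}{q((1,1)-o,\gamma,n)}$. (3) If the user, in timesteps $n\ge m$, only buys the base product (and never buys the upgrade), then for the optimal such strategy there is a timestep $n_3^{\tau}$ such that he subscribes in exactly those timesteps $n$ with $m\le n<n_3^{\tau}$ in which he has demand, and buys the base product in timestep $n_3^{\tau}$ if he still has demand; moreover $n_3^\tau$ is the smallest $n\ge m$ with $v<\frac{p_S-(1-\delta)p_1^{\ge m}}{q((0,1),\gamma,n)}$.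
   Context: Model. Time is discrete with timesteps $n=1,2,\dots$. Fixed parameters: integers $m\ge1$ (release timestep of an upgrade) and $n_{max}\ge1$, qualities $q_1,q_2>0$, and $v_{max}>0$. A publisher fixes a price vector $p=(p_1^{<m},p_1^{\ge m},p_2,p_S)\in[0,\infty]^4$ (a price $\infty$ means the option is not offered). In timestep $n$ the base product can be bought for $p_1^n$, where $p_1^n=p_1^{<m}$ if $n<m$ and $p_1^n=p_1^{\ge m}$ if $n\ge m$; the upgrade can be bought for $p_2$ only in timesteps $n\ge m$; a subscription costs $p_S$ per timestep. A user has type $\tau=(n_a,\delta,\gamma,v)$: arrival timestep $n_a\in\{1,\dots,n_{max}\}$, engagement factor $\delta\in(0,1)$, quality decay factor $\gamma\in(0,1)$, value $v\in[0,v_{max}]$. His state is $\sigma=(d,o)$ with demand $d\in\{0,1\}$ and ownership vector $o=(o_1,o_2)\in\{0,1\}^2$ ($o_1=1$: owns base product; $o_2=1$: owns upgrade). He is present (and acts) only from timestep $n_a$ on, starting in state $(1,(0,0))$. In each timestep $n\ge n_a$ he chooses an action $(S,b)$, $S\in\{0,1\}$ (subscribe in this timestep), $b=(b_1,b_2)\in\{0,1\}^2$ (buy base product / upgrade; $b_2=1$ only possible if $n\ge m$). Buying changes ownership to the componentwise maximum $\max(o,b)$. Subscribing in timestep $n$ gives access to $o_S^n=(1,0)$ if $n<m$ and $o_S^n=(1,1)$ if $n\ge m$. The realized quality of access vector $o$ in timestep $n$ is $q(o,\gamma,n)=o_1\gamma^{n}q_1+o_2\gamma^{n-m}q_2$.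 Immediate normalized reward: $w_n=d\big((1-S)\,q(\max(o,b),\gamma,n)+S\,q(o_S^n,\gamma,n)\big)$; immediate payment: $\rho_n=p_SS+p_1^nb_1+p_2b_2$; immediate utility $v w_n-\rho_n$. Demand dynamics: in every timestep in which the user uses the product (has demand and has access via ownership or subscription) he loses demand ($d$ becomes $0$) with probability $1-\delta$; in timestep $m$ a user with $d=0$ regains demand $d=1$ with probability $\delta$; otherwise demand does not change. A strategy $\alpha$ maps (timestep, state) to an action. Expected normalized reward $w(\alpha,\tau)=\sum_{n\ge n_a}\mathbb E[w_n]$, expected payment $\rho(\alpha,\tau,p)=\sum_{n\ge n_a}\mathbb E[\rho_n]$, expected utility $u(\alpha,\tau)=v\,w(\alpha,\tau)-\rho(\alpha,\tau,p)$; "optimal" means maximizing $u$. *)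

theory Defs
  imports "HOL-Analysis.Analysis"
begin

(* State sigma = (d, o1, o2): demand d, ownership vector o = (o1, o2).
   Action a = (S, b1, b2): subscribe S, buy base product b1, buy upgrade b2.
   Booleans encode {0,1}. *)
type_synonym state = "bool \<times> bool \<times> bool"
type_synonym action = "bool \<times> bool \<times> bool"
type_synonym strategy = "nat \<Rightarrow> state \<Rightarrow> action"
(* user type tau = (n_a, delta, gamma, v) *)
type_synonym utype = "nat \<times> real \<times> real \<times> real"
(* price vector p = (p1_{<m}, p1_{>=m}, p2, pS), entries in [0,\<infinity>] *)
type_synonym prices = "ennreal \<times> ennreal \<times> ennreal \<times> ennreal"

definition own :: "state \<Rightarrow> bool \<times> bool" where
  "own \<sigma> = snd \<sigma>"

definition dem :: "state \<Rightarrow> bool" where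
  "dem \<sigma> = fst \<sigma>"

definition subs :: "action \<Rightarrow> bool" where
  "subs a = fst a"

definition buy1 :: "action \<Rightarrow> bool" where
  "buy1 a = fst (snd a)"

definition buy2 :: "action \<Rightarrow> bool" where
  "buy2 a = snd (snd a)"

definition compl_own :: "bool \<times> bool \<Rightarrow> bool \<times> bool" where
  "compl_own o' = (\<not> fst o', \<not> snd o')"

definition qual :: "nat \<Rightarrow> real \<Rightarrow> real \<Rightarrow> real \<Rightarrow> bool \<times> bool \<Rightarrow> nat \<Rightarrow> real" where
  "qual m q1 q2 \<gamma> o' n =
     of_bool (fst o') * \<gamma> ^ n * q1 + of_bool (snd o') * \<gamma> powi (int n - int m) * q2"

(* access vector granted by a subscription in timestep n *)
definition oS :: "nat \<Rightarrow> nat \<Rightarrow> bool \<times> bool" where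
  "oS m n = (True, m \<le> n)"

definition reward :: "nat \<Rightarrow> real \<Rightarrow> real \<Rightarrow> real \<Rightarrow> nat \<Rightarrow> state \<Rightarrow> action \<Rightarrow> real" where
  "reward m q1 q2 \<gamma> n \<sigma> a =
     of_bool (dem \<sigma>) *
       (if subs a then qual m q1 q2 \<gamma> (oS m n) n
        else qual m q1 q2 \<gamma> (fst (own \<sigma>) \<or> buy1 a, snd (own \<sigma>) \<or> buy2 a) n)"

definition price1 :: "nat \<Rightarrow> prices \<Rightarrow> nat \<Rightarrow> ennreal" where
  "price1 m p n = (if n < m then fst p else fst (snd p))"

definition price2 :: "prices \<Rightarrow> ennreal" where
  "price2 p = fst (snd (snd p))"

definition priceS :: "prices \<Rightarrow> ennreal" where
  "priceS p = snd (snd (snd p))"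

definition payment :: "nat \<Rightarrow> prices \<Rightarrow> nat \<Rightarrow> action \<Rightarrow> ennreal" where
  "payment m p n a =
     (if subs a then priceS p else 0) + (if buy1 a then price1 m p n else 0)
     + (if buy2 a then price2 p else 0)"

(* Probability of being in state sigma' at timestep n+1, given state sigma and action a
   in timestep n.  On entering timestep m, a user with d = 0 regains
   demand with probability delta. *)
definition trans :: "nat \<Rightarrow> real \<Rightarrow> nat \<Rightarrow> state \<Rightarrow> action \<Rightarrow> state \<Rightarrow> real" where
  "trans m \<delta> n \<sigma> a \<sigma>' =
     (let o1 = fst (own \<sigma>) \<or> buy1 a;
          o2 = snd (own \<sigma>) \<or> buy2 a;
          used = dem \<sigma> \<and> (subs a \<or> o1 \<or> o2);
          pd = (if used then \<delta> else of_bool (dem \<sigma>));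
          pd' = (if Suc n = m then pd + (1 - pd) * \<delta> else pd)
      in if own \<sigma>' = (o1, o2) then (if dem \<sigma>' then pd' else 1 - pd') else 0)"

(* dist m delta alpha n_a k sigma = probability of being in state sigma in timestep n_a + k *)
primrec dist :: "nat \<Rightarrow> real \<Rightarrow> strategy \<Rightarrow> nat \<Rightarrow> nat \<Rightarrow> state \<Rightarrow> real" where
  "dist m \<delta> \<alpha> na 0 = (\<lambda>\<sigma>. if \<sigma> = (True, False, False) then 1 else 0)"
| "dist m \<delta> \<alpha> na (Suc k) = (\<lambda>\<sigma>'. \<Sum>\<sigma>\<in>UNIV.
      dist m \<delta> \<alpha> na k \<sigma> * trans m \<delta> (na + k) \<sigma> (\<alpha> (na + k) \<sigma>) \<sigma>')"

definition arr :: "utype \<Rightarrow> nat" where "arr \<tau> = fst \<tau>"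
definition eng :: "utype \<Rightarrow> real" where "eng \<tau> = fst (snd \<tau>)"
definition dec :: "utype \<Rightarrow> real" where "dec \<tau> = fst (snd (snd \<tau>))"
definition val :: "utype \<Rightarrow> real" where "val \<tau> = snd (snd (snd \<tau>))"

definition reach :: "nat \<Rightarrow> utype \<Rightarrow> strategy \<Rightarrow> nat \<Rightarrow> state \<Rightarrow> bool" where
  "reach m \<tau> \<alpha> n \<sigma> \<longleftrightarrow> arr \<tau> \<le> n \<and> dist m (eng \<tau>) \<alpha> (arr \<tau>) (n - arr \<tau>) \<sigma> > 0"

definition exp_reward :: "nat \<Rightarrow> real \<Rightarrow> real \<Rightarrow> utype \<Rightarrow> strategy \<Rightarrow> real" where
  "exp_reward m q1 q2 \<tau> \<alpha> =
     (\<Sum>k. \<Sum>\<sigma>\<in>UNIV. dist m (eng \<tau>) \<alpha> (arr \<tau>) k \<sigma> *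
        reward m q1 q2 (dec \<tau>) (arr \<tau> + k) \<sigma> (\<alpha> (arr \<tau> + k) \<sigma>))"

definition exp_payment :: "nat \<Rightarrow> prices \<Rightarrow> utype \<Rightarrow> strategy \<Rightarrow> ennreal" where
  "exp_payment m p \<tau> \<alpha> =
     (\<Sum>k. \<Sum>\<sigma>\<in>UNIV. ennreal (dist m (eng \<tau>) \<alpha> (arr \<tau>) k \<sigma>) *
        payment m p (arr \<tau> + k) (\<alpha> (arr \<tau> + k) \<sigma>))"

definition utility :: "nat \<Rightarrow> real \<Rightarrow> real \<Rightarrow> prices \<Rightarrow> utype \<Rightarrow> strategy \<Rightarrow> ereal" where
  "utility m q1 q2 p \<tau> \<alpha> =
     ereal (val \<tau> * exp_reward m q1 q2 \<tau> \<alpha>) - enn2ereal (exp_payment m p \<tau> \<alpha>)"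

definition admissible :: "nat \<Rightarrow> strategy \<Rightarrow> bool" where
  "admissible m \<alpha> \<longleftrightarrow> (\<forall>n \<sigma>. n < m \<longrightarrow> \<not> buy2 (\<alpha> n \<sigma>))"

definition optimal_in :: "strategy set \<Rightarrow> (strategy \<Rightarrow> ereal) \<Rightarrow> strategy \<Rightarrow> bool" where
  "optimal_in C u \<alpha> \<longleftrightarrow> \<alpha> \<in> C \<and> (\<forall>\<beta>\<in>C. u \<beta> \<le> u \<alpha>)"

(* Class (1): the user buys the upgrade (and the base product, if not yet owned) in some
   timestep n >= m: from some timestep on he owns (1,1) in every reachable state. *)
definition class_upgrade :: "nat \<Rightarrow> utype \<Rightarrow> strategy set" where
  "class_upgrade m \<tau> = {\<alpha>. admissible m \<alpha> \<and>
     (\<exists>N \<ge> arr \<tau>. \<forall>\<sigma>. reach m \<tau> \<alpha> N \<sigma> \<longrightarrow> own \<sigma> = (True, True))}"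

definition class_nobuy :: "nat \<Rightarrow> utype \<Rightarrow> bool \<times> bool \<Rightarrow> strategy set" where
  "class_nobuy m \<tau> o' = {\<alpha>. admissible m \<alpha> \<and>
     (\<forall>n \<ge> m. \<forall>\<sigma>. reach m \<tau> \<alpha> n \<sigma> \<longrightarrow>
        own \<sigma> = o' \<and> \<not> buy1 (\<alpha> n \<sigma>) \<and> \<not> buy2 (\<alpha> n \<sigma>))}"

(* Class (3): in timesteps n >= m only the base product is bought (never the upgrade):
   the base product is not owned at timestep max(n_a,m), and from some timestep on every
   reachable state with demand owns the base product. *)
definition class_base :: "nat \<Rightarrow> utype \<Rightarrow> strategy set" where
  "class_base m \<tau> = {\<alpha>. admissible m \<alpha> \<and>
     (\<forall>n \<ge> m. \<forall>\<sigma>. reach m \<tau> \<alpha> n \<sigma> \<longrightarrow> \<not> buy2 (\<alpha> n \<sigma>)) \<and>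
     (\<forall>\<sigma>. reach m \<tau> \<alpha> (max (arr \<tau>) m) \<sigma> \<longrightarrow> \<not> fst (own \<sigma>)) \<and>
     (\<exists>N \<ge> arr \<tau>. \<forall>\<sigma>. reach m \<tau> \<alpha> N \<sigma> \<longrightarrow> dem \<sigma> \<longrightarrow> fst (own \<sigma>))}"

definition n2 :: "nat \<Rightarrow> real \<Rightarrow> real \<Rightarrow> prices \<Rightarrow> utype \<Rightarrow> bool \<times> bool \<Rightarrow> enat" where
  "n2 m q1 q2 p \<tau> o' =
     (let P = (\<lambda>n. m \<le> n \<and>
                ennreal (val \<tau>) < priceS p / ennreal (qual m q1 q2 (dec \<tau>) (compl_own o') n))
      in if \<exists>n. P n then enat (LEAST n. P n) else \<infinity>)"

(* condition defining n_3^tau: v < (pS - (1-delta) p1_{>=m}) / q((0,1), gamma, n) *)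
definition cond3 :: "nat \<Rightarrow> real \<Rightarrow> real \<Rightarrow> prices \<Rightarrow> utype \<Rightarrow> nat \<Rightarrow> bool" where
  "cond3 m q1 q2 p \<tau> n \<longleftrightarrow> m \<le> n \<and>
     ennreal (val \<tau>) < (priceS p - ennreal (1 - eng \<tau>) * fst (snd p))
                        / ennreal (qual m q1 q2 (dec \<tau>) (False, True) n)"

end

theory Submission
  imports Defs
begin

text \<open>All three claims follow from one verification argument for the Markov chain of user
  states. For each class we give the value function \<open>\<Psi>\<close> of the claimed strategy from timestep
  \<open>max n\<^sub>a m\<close> on and check the Bellman equation for the claimed action and the Bellman inequality
  for every other action the class allows; telescoping then shows that switching any strategy of
  the class to the claimed behaviour from that timestep on does not lower its utility, and a best
  one among the finitely many resulting strategies is optimal. The thresholds \<open>n\<^sub>2\<close> and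
  \<open>n\<^sub>3\<close> appear because the one-timestep gain of subscribing decays geometrically with
  \<open>\<gamma>\<close>, so it is nonnegative exactly before the threshold; \<open>\<Psi>\<close> adds up these gains
  discounted by the survival probability \<open>\<delta>\<close> of demand.\<close>

lemma sum_UNIV_state:
  "(\<Sum>\<sigma>\<in>(UNIV::state set). f \<sigma>) =
     f (True,True,True) + f (True,True,False) + f (True,False,True) + f (True,False,False) +
     f (False,True,True) + f (False,True,False) + f (False,False,True) + f (False,False,False)"
  by (simp add: UNIV_Times_UNIV[symmetric] UNIV_bool sum.cartesian_product[symmetric] ac_simps
           del: UNIV_Times_UNIV)

lemma ennreal_less_divide_iff:
  fixes v q :: real and X :: ennreal
  assumes "0 \<le> v" "0 \<le> q"
  shows "ennreal v < X / ennreal q \<longleftrightarrow> X = top \<or> v * q < enn2real X"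
proof (cases "X = top")
  case True
  then have "X / ennreal q = top" by (simp add: ennreal_divide_eq_top_iff)
  then show ?thesis using True by simp
next
  case False
  then obtain x where x: "X = ennreal x" "0 \<le> x" by (cases X) auto
  show ?thesis
  proof (cases "q = 0")
    case True
    then show ?thesis using x by (cases "x = 0") (simp_all add: ennreal_divide_eq_top_iff)
  next
    case False
    then have q: "0 < q" using assms by simp
    have "ennreal v < X / ennreal q \<longleftrightarrow> v < x / q"
      using x q assms by (simp add: divide_ennreal ennreal_less_iff)
    also have "\<dots> \<longleftrightarrow> v * q < x" using q by (simp add: field_simps)
    finally show ?thesis using x by simp
  qed
qed

lemma enat_less_least_iff_nonneg:
  fixes a :: "nat \<Rightarrow> real"
  assumes P: "\<And>n. P n \<longleftrightarrow> m \<le> n \<and> a n < 0" and mono: "\<And>k. m \<le> k \<Longrightarrow> a (Suc k) \<le> a k"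
    and k: "m \<le> k"
  shows "enat k < (if \<exists>n. P n then enat (LEAST n. P n) else \<infinity>) \<longleftrightarrow> 0 \<le> a k"
proof (cases "\<exists>n. P n")
  case True
  define L where "L = (LEAST n. P n)"
  have L: "m \<le> L" "a L < 0" using LeastI_ex[OF True] P by (auto simp: L_def)
  have "k < L \<longleftrightarrow> 0 \<le> a k"
  proof
    assume "k < L"
    then show "0 \<le> a k" using not_less_Least[of k P] P k by (auto simp: L_def)
  next
    assume "0 \<le> a k"
    moreover have "L \<le> k \<Longrightarrow> a k \<le> a L"
      using lift_Suc_antimono_le_ivl[of "{m..}" a L k] mono L(1) by fastforce
    ultimately show "k < L" using L(2) by fastforce
  qed
  then show ?thesis using True by (simp add: L_def)
qed (use P k in auto)

definition splice :: "nat \<Rightarrow> (nat \<Rightarrow> 'a) \<Rightarrow> (nat \<Rightarrow> 'a) \<Rightarrow> nat \<Rightarrow> 'a" where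
  "splice M \<beta> \<alpha> n = (if n < M then \<beta> n else \<alpha> n)"

text \<open>Only finitely many strategies arise by splicing onto a fixed tail, since states and
  actions range over finite types.\<close>

lemma optimal_in_splice_exists:
  fixes C :: "strategy set" and u :: "strategy \<Rightarrow> ereal"
  assumes "C \<noteq> {}" and closed: "\<And>\<beta>. \<beta> \<in> C \<Longrightarrow> splice M \<beta> \<alpha> \<in> C"
    and improves: "\<And>\<beta>. \<beta> \<in> C \<Longrightarrow> u \<beta> \<le> u (splice M \<beta> \<alpha>)"
  shows "\<exists>\<beta>\<in>C. optimal_in C u (splice M \<beta> \<alpha>)"
proof -
  define S where "S = (\<lambda>\<beta>. splice M \<beta> \<alpha>) ` C"
  have "S \<subseteq> (\<lambda>\<beta>. splice M \<beta> \<alpha>) ` PiE {..<M} (\<lambda>_. UNIV)"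
  proof
    fix g assume "g \<in> S"
    then obtain \<beta> where "g = splice M \<beta> \<alpha>" by (auto simp: S_def)
    moreover have "splice M \<beta> \<alpha> = splice M (restrict \<beta> {..<M}) \<alpha>"
      by (auto simp: splice_def)
    ultimately show "g \<in> (\<lambda>\<beta>. splice M \<beta> \<alpha>) ` PiE {..<M} (\<lambda>_. UNIV)" by force
  qed
  then have fin: "finite S" by (rule finite_subset) (intro finite_imageI finite_PiE; simp)
  have "Max (u ` S) \<in> u ` S" using fin assms(1) by (intro Max_in) (auto simp: S_def)
  then obtain \<beta>0 where \<beta>0: "\<beta>0 \<in> C" "u (splice M \<beta>0 \<alpha>) = Max (u ` S)" by (auto simp: S_def)
  have "u \<beta> \<le> u (splice M \<beta>0 \<alpha>)" if "\<beta> \<in> C" for \<beta>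
  proof -
    have "u (splice M \<beta> \<alpha>) \<le> Max (u ` S)" using fin that by (intro Max_ge) (auto simp: S_def)
    then show ?thesis using improves[OF that] \<beta>0 by simp
  qed
  then show ?thesis using \<beta>0 closed unfolding optimal_in_def by blast
qed

locale user_model =
  fixes m :: nat and q1 q2 \<delta> \<gamma> v :: real and na :: nat
  assumes \<delta>_pos: "0 < \<delta>" and \<delta>_less_1: "\<delta> < 1" and \<gamma>_pos: "0 < \<gamma>" and \<gamma>_less_1: "\<gamma> < 1"
    and q1_pos: "0 < q1" and q2_pos: "0 < q2" and v_nonneg: "0 \<le> v"
begin

abbreviation tau :: utype where "tau \<equiv> (na, \<delta>, \<gamma>, v)"
abbreviation tr :: "nat \<Rightarrow> state \<Rightarrow> action \<Rightarrow> state \<Rightarrow> real" where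
  "tr n \<sigma> a \<sigma>' \<equiv> trans m \<delta> n \<sigma> a \<sigma>'"
abbreviation ds :: "strategy \<Rightarrow> nat \<Rightarrow> state \<Rightarrow> real" where
  "ds \<alpha> k \<sigma> \<equiv> dist m \<delta> \<alpha> na k \<sigma>"
abbreviation reachable :: "strategy \<Rightarrow> nat \<Rightarrow> state \<Rightarrow> bool" where
  "reachable \<alpha> n \<sigma> \<equiv> reach m tau \<alpha> n \<sigma>"

lemma tau_simps [simp]: "arr tau = na" "eng tau = \<delta>" "dec tau = \<gamma>" "val tau = v"
  by (simp_all add: arr_def eng_def dec_def val_def)

section \<open>The Markov chain of user states\<close>

fun keep_prob :: "state \<Rightarrow> action \<Rightarrow> real" where
  "keep_prob (d, o1, o2) (s, b1, b2) = (if d \<and> (s \<or> o1 \<or> b1 \<or> o2 \<or> b2) then \<delta> else of_bool d)"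

lemma sum_own_dem:
  "(\<Sum>\<sigma>'\<in>UNIV. (if own \<sigma>' = o' then (if dem \<sigma>' then x else 1 - x) else 0) * g \<sigma>') =
     x * g (True, o') + (1 - x) * (g (False, o') :: real)"
  by (cases o') (simp add: sum_UNIV_state own_def dem_def)

lemma trans_nonneg: "0 \<le> tr n \<sigma> a \<sigma>'"
proof -
  have "\<delta> * 2 \<le> 1 + \<delta> * \<delta>" using zero_le_power2[of "1 - \<delta>"] by (simp add: power2_eq_square algebra_simps)
  then show ?thesis using \<delta>_pos \<delta>_less_1 unfolding trans_def Let_def
    by (auto simp: algebra_simps intro: mult_nonneg_nonneg)
qed

lemma sum_trans: "(\<Sum>\<sigma>'\<in>UNIV. tr n \<sigma> a \<sigma>') = 1"
  unfolding trans_def Let_def using sum_own_dem[where g="\<lambda>_. 1"] by simp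

lemma sum_trans_mult:
  assumes "Suc n \<noteq> m"
  shows "(\<Sum>\<sigma>'\<in>UNIV. tr n \<sigma> a \<sigma>' * g \<sigma>') =
    keep_prob \<sigma> a * g (True, fst (own \<sigma>) \<or> buy1 a, snd (own \<sigma>) \<or> buy2 a)
    + (1 - keep_prob \<sigma> a) * g (False, fst (own \<sigma>) \<or> buy1 a, snd (own \<sigma>) \<or> buy2 a)"
proof -
  have "keep_prob \<sigma> a = (if dem \<sigma> \<and> (subs a \<or> (fst (own \<sigma>) \<or> buy1 a) \<or> (snd (own \<sigma>) \<or> buy2 a))
                         then \<delta> else of_bool (dem \<sigma>))"
    by (cases \<sigma>; cases a) (auto simp: dem_def own_def subs_def buy1_def buy2_def)
  then show ?thesis unfolding trans_def Let_def using assms by (simp only: if_False sum_own_dem)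
qed

lemma trans_pos_own: "0 < tr n \<sigma> a \<sigma>' \<Longrightarrow> own \<sigma>' = (fst (own \<sigma>) \<or> buy1 a, snd (own \<sigma>) \<or> buy2 a)"
  unfolding trans_def Let_def by (auto split: if_splits)

lemma trans_pos_dem: "0 < tr n \<sigma> a \<sigma>' \<Longrightarrow> Suc n \<noteq> m \<Longrightarrow> dem \<sigma>' \<Longrightarrow> dem \<sigma>"
  unfolding trans_def Let_def by (auto split: if_splits)

lemma trans_pos_demand:
  "dem \<sigma> \<or> Suc n = m \<Longrightarrow> 0 < tr n \<sigma> a (True, fst (own \<sigma>) \<or> buy1 a, snd (own \<sigma>) \<or> buy2 a)"
  using \<delta>_pos \<delta>_less_1 unfolding trans_def Let_def
  by (auto simp: own_def dem_def algebra_simps intro: add_pos_nonneg mult_nonneg_nonneg)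

lemma trans_pos_ex: "\<exists>\<sigma>'. 0 < tr n \<sigma> a \<sigma>'"
proof (rule ccontr)
  assume "\<nexists>\<sigma>'. 0 < tr n \<sigma> a \<sigma>'"
  then have "\<And>\<sigma>'. tr n \<sigma> a \<sigma>' = 0" using trans_nonneg by (metis order.not_eq_order_implies_strict)
  then show False using sum_trans[of n \<sigma> a] by simp
qed

lemma dist_nonneg: "0 \<le> ds \<alpha> k \<sigma>"
  by (induction k arbitrary: \<sigma>) (auto intro!: sum_nonneg mult_nonneg_nonneg trans_nonneg)

lemma sum_dist_mult:
  "(\<Sum>\<sigma>'\<in>UNIV. ds \<alpha> (Suc k) \<sigma>' * g \<sigma>') =
     (\<Sum>\<sigma>\<in>UNIV. ds \<alpha> k \<sigma> * (\<Sum>\<sigma>'\<in>UNIV. tr (na+k) \<sigma> (\<alpha> (na+k) \<sigma>) \<sigma>' * g \<sigma>'))"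
  by (simp add: sum_distrib_left sum_distrib_right mult.assoc) (rule sum.swap)

lemma sum_dist: "(\<Sum>\<sigma>\<in>UNIV. ds \<alpha> k \<sigma>) = 1"
  by (induction k) (simp_all add: sum.delta sum_dist_mult[where g="\<lambda>_. 1", simplified] sum_trans)

lemma dist_splice:
  "(\<And>n. n < na + K \<Longrightarrow> \<alpha> n = \<beta> n) \<Longrightarrow> k \<le> K \<Longrightarrow> ds \<alpha> k = ds \<beta> k"
  by (induction k) auto

lemma reachable_iff: "reachable \<alpha> n \<sigma> \<longleftrightarrow> na \<le> n \<and> 0 < ds \<alpha> (n - na) \<sigma>"
  by (simp add: reach_def)

lemma reachable_offset: "reachable \<alpha> (na + k) \<sigma> \<longleftrightarrow> 0 < ds \<alpha> k \<sigma>"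
  by (simp add: reach_def)

lemma reachable_init: "reachable \<alpha> na \<sigma> \<longleftrightarrow> \<sigma> = (True, False, False)"
  by (simp add: reach_def)

lemma reachable_ge: "reachable \<alpha> n \<sigma> \<Longrightarrow> na \<le> n"
  by (simp add: reach_def)

lemma reachable_pred:
  assumes "reachable \<alpha> (Suc n) \<sigma>'" "na \<le> n"
  obtains \<sigma> where "reachable \<alpha> n \<sigma>" "0 < tr n \<sigma> (\<alpha> n \<sigma>) \<sigma>'"
proof -
  have "Suc n - na = Suc (n - na)" "na + (n - na) = n" using assms(2) by auto
  then have "0 < (\<Sum>\<sigma>\<in>UNIV. ds \<alpha> (n - na) \<sigma> * tr n \<sigma> (\<alpha> n \<sigma>) \<sigma>')"
    using assms(1) by (simp add: reach_def)
  then obtain \<sigma> where pos: "0 < ds \<alpha> (n - na) \<sigma> * tr n \<sigma> (\<alpha> n \<sigma>) \<sigma>'"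
    by (metis (no_types, lifting) linorder_not_less sum_nonpos)
  have "0 \<le> ds \<alpha> (n - na) \<sigma>" "0 \<le> tr n \<sigma> (\<alpha> n \<sigma>) \<sigma>'"
    by (rule dist_nonneg trans_nonneg)+
  then have "0 < ds \<alpha> (n - na) \<sigma>" "0 < tr n \<sigma> (\<alpha> n \<sigma>) \<sigma>'"
    using pos by (auto simp: zero_less_mult_iff)
  then show thesis using that assms(2) by (simp add: reach_def)
qed

lemma reachable_succ:
  assumes "reachable \<alpha> n \<sigma>" "0 < tr n \<sigma> (\<alpha> n \<sigma>) \<sigma>'"
  shows "reachable \<alpha> (Suc n) \<sigma>'"
proof -
  have n: "na \<le> n" "Suc n - na = Suc (n - na)" "na + (n - na) = n" using assms(1) by (auto simp: reach_def)
  have "0 < (\<Sum>s\<in>UNIV. ds \<alpha> (n - na) s * tr n s (\<alpha> n s) \<sigma>')"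
    by (rule sum_pos2[where i=\<sigma>])
       (use assms n in \<open>auto simp: reach_def intro!: mult_nonneg_nonneg dist_nonneg trans_nonneg\<close>)
  then show ?thesis using n by (simp add: reach_def)
qed

lemma reachable_ex: "na \<le> n \<Longrightarrow> \<exists>\<sigma>. reachable \<alpha> n \<sigma>"
proof (rule ccontr)
  assume "na \<le> n" "\<nexists>\<sigma>. reachable \<alpha> n \<sigma>"
  then have "\<And>\<sigma>. ds \<alpha> (n - na) \<sigma> = 0"
    using dist_nonneg by (metis order.not_eq_order_implies_strict reachable_iff)
  then show False using sum_dist[of \<alpha> "n - na"] by simp
qed

lemma reachable_induct_from [consumes 3, case_names init step]:
  assumes "na \<le> N" "N \<le> n" "reachable \<alpha> n \<sigma>"
    and init: "\<And>\<sigma>. reachable \<alpha> N \<sigma> \<Longrightarrow> P N \<sigma>"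
    and step: "\<And>n \<sigma> \<sigma>'. N \<le> n \<Longrightarrow> reachable \<alpha> n \<sigma> \<Longrightarrow> 0 < tr n \<sigma> (\<alpha> n \<sigma>) \<sigma>' \<Longrightarrow> P n \<sigma>
                 \<Longrightarrow> P (Suc n) \<sigma>'"
  shows "P n \<sigma>"
  using assms(2,3)
proof (induction n arbitrary: \<sigma>)
  case 0
  then have "N = 0" by simp
  with init[OF 0(2)[folded this]] show ?case by simp
next
  case (Suc n)
  show ?case
  proof (cases "Suc n = N")
    case True
    with init[OF Suc.prems(2)[unfolded True]] show ?thesis by simp
  next
    case False
    then have Nn: "N \<le> n" using Suc.prems by simp
    then have "na \<le> n" using assms(1) by linarith
    then obtain \<sigma>0 where r: "reachable \<alpha> n \<sigma>0" and t: "0 < tr n \<sigma>0 (\<alpha> n \<sigma>0) \<sigma>"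
      by (rule reachable_pred[OF Suc.prems(2)])
    show ?thesis by (rule step[OF Nn r t Suc.IH[OF Nn r]])
  qed
qed

lemma reachable_induct [consumes 1, case_names init step]:
  assumes "reachable \<alpha> n \<sigma>" and init: "P na (True, False, False)"
    and step: "\<And>n \<sigma> \<sigma>'. reachable \<alpha> n \<sigma> \<Longrightarrow> 0 < tr n \<sigma> (\<alpha> n \<sigma>) \<sigma>' \<Longrightarrow> P n \<sigma> \<Longrightarrow> P (Suc n) \<sigma>'"
  shows "P n \<sigma>"
proof (rule reachable_induct_from[where P=P, OF order_refl reachable_ge[OF assms(1)] assms(1)])
  fix \<sigma> assume "reachable \<alpha> na \<sigma>"
  then show "P na \<sigma>" using init by (simp add: reachable_init)
next
  fix n \<sigma> \<sigma>' assume "reachable \<alpha> n \<sigma>" "0 < tr n \<sigma> (\<alpha> n \<sigma>) \<sigma>'" "P n \<sigma>"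
  then show "P (Suc n) \<sigma>'" by (rule step)
qed

lemma reachable_propagate:
  assumes "reachable \<alpha> n \<sigma>" "P \<sigma>" "n \<le> n'"
    and step: "\<And>k \<sigma>. n \<le> k \<Longrightarrow> reachable \<alpha> k \<sigma> \<Longrightarrow> P \<sigma> \<Longrightarrow> \<exists>\<sigma>'. P \<sigma>' \<and> 0 < tr k \<sigma> (\<alpha> k \<sigma>) \<sigma>'"
  shows "\<exists>\<sigma>'. reachable \<alpha> n' \<sigma>' \<and> P \<sigma>'"
proof -
  have "\<exists>\<sigma>'. reachable \<alpha> (n + j) \<sigma>' \<and> P \<sigma>'" for j
  proof (induction j)
    case 0
    show ?case by (rule exI[of _ \<sigma>]) (simp add: assms(1,2))
  next
    case (Suc j)
    then obtain \<sigma>1 where r: "reachable \<alpha> (n + j) \<sigma>1" and "P \<sigma>1" by blast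
    then obtain \<sigma>' where "P \<sigma>'" and t: "0 < tr (n + j) \<sigma>1 (\<alpha> (n + j) \<sigma>1) \<sigma>'"
      using step[of "n + j" \<sigma>1] by auto
    then show ?case using reachable_succ[OF r t] by (intro exI[of _ \<sigma>']) simp
  qed
  from this[of "n' - n"] show ?thesis using assms(3) by simp
qed

lemma reachable_exit_action:
  assumes "reachable \<alpha> n \<sigma>" "P \<sigma>" "n \<le> N" "\<And>\<sigma>'. reachable \<alpha> N \<sigma>' \<Longrightarrow> \<not> P \<sigma>'"
    and step: "\<And>k \<sigma>. reachable \<alpha> k \<sigma> \<Longrightarrow> P \<sigma> \<Longrightarrow> \<not> exit (\<alpha> k \<sigma>) \<Longrightarrow>
                  \<exists>\<sigma>'. P \<sigma>' \<and> 0 < tr k \<sigma> (\<alpha> k \<sigma>) \<sigma>'"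
  shows "\<exists>k \<sigma>'. n \<le> k \<and> reachable \<alpha> k \<sigma>' \<and> exit (\<alpha> k \<sigma>')"
proof (rule ccontr)
  assume none: "\<not> ?thesis"
  have "\<exists>\<sigma>'. reachable \<alpha> N \<sigma>' \<and> P \<sigma>'"
  proof (rule reachable_propagate[where P=P, OF assms(1-3)])
    fix k \<sigma> assume "n \<le> k" and r: "reachable \<alpha> k \<sigma>" and "P \<sigma>"
    then have "\<not> exit (\<alpha> k \<sigma>)" using none by blast
    then show "\<exists>\<sigma>'. P \<sigma>' \<and> 0 < tr k \<sigma> (\<alpha> k \<sigma>) \<sigma>'" by (rule step[OF r \<open>P \<sigma>\<close>])
  qed
  then show False using assms(4) by blast
qed

end

section \<open>Qualities, rewards and the utility as a series\<close>

context user_model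
begin

definition Q1 :: "nat \<Rightarrow> real" where "Q1 n = \<gamma> ^ n * q1"
definition Q2 :: "nat \<Rightarrow> real" where "Q2 n = \<gamma> powi (int n - int m) * q2"
definition qual_bound :: real where "qual_bound = q1 + q2 / \<gamma> ^ m"

lemma qual_eq: "qual m q1 q2 \<gamma> (o1, o2) n = of_bool o1 * Q1 n + of_bool o2 * Q2 n"
  by (simp add: qual_def Q1_def Q2_def)

lemma Q1_pos: "0 < Q1 n"
  using \<gamma>_pos q1_pos by (simp add: Q1_def)

lemma Q2_eq: "Q2 n = \<gamma> ^ n * (q2 / \<gamma> ^ m)"
proof -
  have "\<gamma> powi (int n - int m) = \<gamma> powi (int n) / \<gamma> powi (int m)"
    using \<gamma>_pos by (simp add: power_int_diff)
  then show ?thesis by (simp add: Q2_def)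
qed

lemma Q2_pos: "0 < Q2 n"
  using \<gamma>_pos q2_pos by (simp add: Q2_eq)

lemma Q1_Suc: "Q1 (Suc n) = \<gamma> * Q1 n"
  by (simp add: Q1_def)

lemma Q2_Suc: "Q2 (Suc n) = \<gamma> * Q2 n"
  by (simp add: Q2_eq)

lemma qual_Suc: "qual m q1 q2 \<gamma> o' (Suc n) = \<gamma> * qual m q1 q2 \<gamma> o' n"
  by (cases o') (simp add: qual_eq Q1_Suc Q2_Suc algebra_simps)

lemma qual_nonneg: "0 \<le> qual m q1 q2 \<gamma> o' n"
  using Q1_pos[of n] Q2_pos[of n] by (cases o') (simp add: qual_eq)

lemma qual_le_bound: "qual m q1 q2 \<gamma> o' n \<le> qual_bound * \<gamma> ^ n"
proof -
  have "Q1 n + Q2 n = qual_bound * \<gamma> ^ n" by (simp add: Q1_def Q2_eq qual_bound_def algebra_simps)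
  then show ?thesis using Q1_pos[of n] Q2_pos[of n] by (cases o') (auto simp: qual_eq)
qed

lemma qual_bound_nonneg: "0 \<le> qual_bound * \<gamma> ^ n"
  using order.trans[OF qual_nonneg qual_le_bound] .

lemma qual_add_compl: "Q1 n + Q2 n = qual m q1 q2 \<gamma> o' n + qual m q1 q2 \<gamma> (compl_own o') n"
  by (cases o') (simp add: qual_eq compl_own_def)

lemma reward_nonneg: "0 \<le> reward m q1 q2 \<gamma> n \<sigma> a"
  by (simp add: reward_def qual_nonneg)

lemma reward_le: "reward m q1 q2 \<gamma> n \<sigma> a \<le> qual_bound * \<gamma> ^ n"
  using qual_bound_nonneg[of n] by (auto simp: reward_def qual_le_bound)

text \<open>The value \<open>q(o, \<gamma>, n) / (1 - \<delta> \<gamma>)\<close> of access \<open>o\<close> for a user with demand in timestep \<open>n\<close>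
  who keeps using it: demand survives each use with probability \<open>\<delta>\<close>, quality decays by \<open>\<gamma>\<close>.\<close>

definition disc_qual :: "bool \<times> bool \<Rightarrow> nat \<Rightarrow> real" where
  "disc_qual o' n = qual m q1 q2 \<gamma> o' n / (1 - \<delta> * \<gamma>)"

lemma one_minus_\<delta>\<gamma>_pos: "0 < 1 - \<delta> * \<gamma>"
  using mult_strict_mono[of \<delta> 1 \<gamma> 1] \<delta>_pos \<delta>_less_1 \<gamma>_pos \<gamma>_less_1 by simp

lemma disc_qual_Suc: "disc_qual o' (Suc n) = \<gamma> * disc_qual o' n"
  by (simp add: disc_qual_def qual_Suc)

lemma disc_qual_nonneg: "0 \<le> disc_qual o' n"
  using qual_nonneg one_minus_\<delta>\<gamma>_pos by (simp add: disc_qual_def)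

lemma disc_qual_Suc_le: "disc_qual o' (Suc n) \<le> disc_qual o' n"
  using disc_qual_nonneg[of o' n] \<gamma>_pos \<gamma>_less_1 by (simp add: disc_qual_Suc mult_left_le_one_le)

lemma disc_qual_rec: "v * disc_qual o' n = v * qual m q1 q2 \<gamma> o' n + \<delta> * (v * disc_qual o' (Suc n))"
proof -
  have "disc_qual o' n = qual m q1 q2 \<gamma> o' n + \<delta> * (\<gamma> * disc_qual o' n)"
    using one_minus_\<delta>\<gamma>_pos by (simp add: disc_qual_def field_simps)
  then have "v * disc_qual o' n = v * (qual m q1 q2 \<gamma> o' n + \<delta> * (\<gamma> * disc_qual o' n))"
    by (rule arg_cong)
  then show ?thesis by (simp add: disc_qual_Suc algebra_simps)
qed

lemma disc_qual_le: "v * disc_qual o' n \<le> v * qual_bound / (1 - \<delta> * \<gamma>) * \<gamma> ^ n"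
  using qual_le_bound[of o' n] one_minus_\<delta>\<gamma>_pos v_nonneg
  by (simp add: disc_qual_def divide_right_mono mult_left_mono mult.assoc)

lemma disc_qual_none: "disc_qual (False, False) n = 0"
  by (simp add: disc_qual_def qual_eq)

definition expect :: "strategy \<Rightarrow> (nat \<Rightarrow> state \<Rightarrow> real) \<Rightarrow> nat \<Rightarrow> real" where
  "expect \<alpha> f k = (\<Sum>\<sigma>\<in>UNIV. ds \<alpha> k \<sigma> * f (na + k) \<sigma>)"

lemma expect_const: "expect \<alpha> (\<lambda>_ _. c) k = c"
  by (simp add: expect_def sum_distrib_right[symmetric] sum_dist)

lemma expect_mono:
  assumes "\<And>\<sigma>. reachable \<alpha> (na + k) \<sigma> \<Longrightarrow> f (na + k) \<sigma> \<le> g (na + k) \<sigma>"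
  shows "expect \<alpha> f k \<le> expect \<alpha> g k"
  unfolding expect_def
proof (rule sum_mono)
  fix \<sigma>
  show "ds \<alpha> k \<sigma> * f (na + k) \<sigma> \<le> ds \<alpha> k \<sigma> * g (na + k) \<sigma>"
    using assms[of \<sigma>] dist_nonneg[of \<alpha> k \<sigma>]
    by (cases "ds \<alpha> k \<sigma> = 0") (auto simp: reachable_offset intro: mult_left_mono)
qed

lemma expect_cong:
  assumes "\<And>\<sigma>. reachable \<alpha> (na + k) \<sigma> \<Longrightarrow> f (na + k) \<sigma> = g (na + k) \<sigma>"
  shows "expect \<alpha> f k = expect \<alpha> g k"
  using expect_mono[of \<alpha> k f g] expect_mono[of \<alpha> k g f] assms by fastforce

definition exp_reward_step :: "strategy \<Rightarrow> nat \<Rightarrow> real" where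
  "exp_reward_step \<alpha> = expect \<alpha> (\<lambda>n \<sigma>. reward m q1 q2 \<gamma> n \<sigma> (\<alpha> n \<sigma>))"

definition exp_payment_step :: "prices \<Rightarrow> strategy \<Rightarrow> nat \<Rightarrow> real" where
  "exp_payment_step p \<alpha> = expect \<alpha> (\<lambda>n \<sigma>. enn2real (payment m p n (\<alpha> n \<sigma>)))"

definition net_gain :: "prices \<Rightarrow> strategy \<Rightarrow> nat \<Rightarrow> state \<Rightarrow> real" where
  "net_gain p \<alpha> n \<sigma> = v * reward m q1 q2 \<gamma> n \<sigma> (\<alpha> n \<sigma>) - enn2real (payment m p n (\<alpha> n \<sigma>))"

lemma summable_exp_reward_step: "summable (exp_reward_step \<alpha>)"
proof (rule summable_comparison_test)
  have "exp_reward_step \<alpha> k \<le> expect \<alpha> (\<lambda>_ _. qual_bound * \<gamma> ^ (na + k)) k" for k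
    unfolding exp_reward_step_def by (rule expect_mono) (rule reward_le)
  then have "exp_reward_step \<alpha> k \<le> qual_bound * \<gamma> ^ na * \<gamma> ^ k" for k
    by (simp add: expect_const power_add mult.assoc)
  moreover have "0 \<le> exp_reward_step \<alpha> k" for k
    using expect_mono[of \<alpha> k "\<lambda>_ _. 0"] reward_nonneg by (simp add: exp_reward_step_def expect_const)
  ultimately show "\<exists>N. \<forall>n\<ge>N. norm (exp_reward_step \<alpha> n) \<le> qual_bound * \<gamma> ^ na * \<gamma> ^ n"
    by auto
  show "summable (\<lambda>n. qual_bound * \<gamma> ^ na * \<gamma> ^ n)"
    using \<gamma>_pos \<gamma>_less_1 by (intro summable_mult summable_geometric) auto
qed

lemma expect_net_gain: "expect \<alpha> (net_gain p \<alpha>) k = v * exp_reward_step \<alpha> k - exp_payment_step p \<alpha> k"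
  by (simp add: expect_def net_gain_def exp_reward_step_def exp_payment_step_def
      sum_subtractf sum_distrib_left algebra_simps)

lemma payment_finite_of_reachable:
  assumes "exp_payment m p tau \<alpha> \<noteq> top" "reachable \<alpha> n \<sigma>"
  shows "payment m p n (\<alpha> n \<sigma>) \<noteq> top"
proof
  assume inf: "payment m p n (\<alpha> n \<sigma>) = top"
  define k where "k = n - na"
  have n: "n = na + k" and pos: "0 < ds \<alpha> k \<sigma>" using assms(2) by (auto simp: reach_def k_def)
  let ?t = "\<lambda>k. \<Sum>\<sigma>\<in>UNIV. ennreal (ds \<alpha> k \<sigma>) * payment m p (na + k) (\<alpha> (na + k) \<sigma>)"
  have "(\<Sum>k. ?t k) < top" using assms(1) by (simp add: exp_payment_def less_top[symmetric])
  then have "?t k < top" using ennreal_suminf_lessD by blast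
  moreover have "ennreal (ds \<alpha> k \<sigma>) * payment m p (na + k) (\<alpha> (na + k) \<sigma>) \<le> ?t k"
    by (intro member_le_sum) simp_all
  moreover have "ennreal (ds \<alpha> k \<sigma>) * payment m p (na + k) (\<alpha> (na + k) \<sigma>) = top"
    using inf pos n by (simp add: ennreal_mult_top)
  ultimately show False by (metis leD)
qed

lemma exp_payment_eq_suminf:
  assumes "\<And>n \<sigma>. reachable \<alpha> n \<sigma> \<Longrightarrow> payment m p n (\<alpha> n \<sigma>) \<noteq> top"
  shows "exp_payment m p tau \<alpha> = (\<Sum>k. ennreal (exp_payment_step p \<alpha> k))"
proof -
  have "ennreal (ds \<alpha> k \<sigma>) * payment m p (na + k) (\<alpha> (na + k) \<sigma>) =
        ennreal (ds \<alpha> k \<sigma> * enn2real (payment m p (na + k) (\<alpha> (na + k) \<sigma>)))" for k \<sigma>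
  proof (cases "ds \<alpha> k \<sigma> = 0")
    case False
    then have "payment m p (na + k) (\<alpha> (na + k) \<sigma>) < top"
      using assms[of "na + k" \<sigma>] dist_nonneg[of \<alpha> k \<sigma>]
      by (simp add: reachable_offset less_top[symmetric])
    then show ?thesis using dist_nonneg by (simp add: ennreal_mult)
  qed simp
  then show ?thesis
    by (simp add: exp_payment_def exp_payment_step_def expect_def dist_nonneg)
qed

lemma exp_payment_step_nonneg: "0 \<le> exp_payment_step p \<alpha> k"
  using expect_mono[of \<alpha> k "\<lambda>_ _. 0"] by (simp add: exp_payment_step_def expect_const)

lemma exp_reward_eq_suminf: "exp_reward m q1 q2 tau \<alpha> = suminf (exp_reward_step \<alpha>)"
  by (simp add: exp_reward_def exp_reward_step_def expect_def[abs_def])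

lemma utility_eq_suminf:
  assumes "\<And>n \<sigma>. reachable \<alpha> n \<sigma> \<Longrightarrow> payment m p n (\<alpha> n \<sigma>) \<noteq> top"
    and "summable (expect \<alpha> (net_gain p \<alpha>))"
  shows "utility m q1 q2 p tau \<alpha> = ereal (\<Sum>k. expect \<alpha> (net_gain p \<alpha>) k)"
proof -
  have rew: "summable (\<lambda>k. v * exp_reward_step \<alpha> k)"
    by (intro summable_mult summable_exp_reward_step)
  have pay: "summable (exp_payment_step p \<alpha>)"
    using summable_diff[OF rew assms(2)] by (simp add: expect_net_gain)
  have "exp_payment m p tau \<alpha> = ennreal (suminf (exp_payment_step p \<alpha>))"
    using exp_payment_eq_suminf[OF assms(1)] suminf_ennreal2[OF exp_payment_step_nonneg pay] by simp
  moreover have "0 \<le> suminf (exp_payment_step p \<alpha>)"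
    using pay exp_payment_step_nonneg by (simp add: suminf_nonneg)
  moreover have "(\<Sum>k. expect \<alpha> (net_gain p \<alpha>) k) =
      v * suminf (exp_reward_step \<alpha>) - suminf (exp_payment_step p \<alpha>)"
    using suminf_diff[OF rew pay] suminf_mult[OF summable_exp_reward_step]
    by (simp add: expect_net_gain)
  ultimately show ?thesis by (simp add: utility_def exp_reward_eq_suminf)
qed

lemma summable_expect_net_gain:
  assumes "exp_payment m p tau \<alpha> \<noteq> top"
  shows "summable (expect \<alpha> (net_gain p \<alpha>))"
proof -
  have "summable (exp_payment_step p \<alpha>)"
    using exp_payment_eq_suminf[OF payment_finite_of_reachable[OF assms]] assms
    by (intro summable_suminf_not_top exp_payment_step_nonneg) simp
  then show ?thesis
    unfolding expect_net_gain by (intro summable_diff summable_mult summable_exp_reward_step)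
qed

end


section \<open>Verification with value functions\<close>

context user_model
begin

lemma dist_splice_prefix: "na \<le> M \<Longrightarrow> k \<le> M - na \<Longrightarrow> ds (splice M \<beta> \<alpha>) k = ds \<beta> k"
  by (rule dist_splice[of "M - na"]) (auto simp: splice_def)

lemma reachable_splice_iff:
  "na \<le> M \<Longrightarrow> n \<le> M \<Longrightarrow> reachable (splice M \<beta> \<alpha>) n \<sigma> \<longleftrightarrow> reachable \<beta> n \<sigma>"
  using dist_splice_prefix[of M "n - na" \<beta> \<alpha>] by (auto simp: reachable_iff)

lemma admissible_splice: "m \<le> M \<Longrightarrow> admissible m \<beta> \<Longrightarrow> admissible m (splice M \<beta> \<alpha>)"
  by (auto simp: admissible_def splice_def)

definition bellman ::
    "strategy \<Rightarrow> (nat \<Rightarrow> state \<Rightarrow> real) \<Rightarrow> (nat \<Rightarrow> state \<Rightarrow> real) \<Rightarrow> nat \<Rightarrow> state \<Rightarrow> real" where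
  "bellman \<alpha> f \<Psi> n \<sigma> = f n \<sigma> + (\<Sum>\<sigma>'\<in>UNIV. tr n \<sigma> (\<alpha> n \<sigma>) \<sigma>' * \<Psi> (Suc n) \<sigma>')"

lemma expect_bellman: "expect \<alpha> f k + expect \<alpha> \<Psi> (Suc k) = expect \<alpha> (bellman \<alpha> f \<Psi>) k"
proof -
  have "expect \<alpha> \<Psi> (Suc k) =
      (\<Sum>\<sigma>\<in>UNIV. ds \<alpha> k \<sigma> * (\<Sum>\<sigma>'\<in>UNIV. tr (na + k) \<sigma> (\<alpha> (na + k) \<sigma>) \<sigma>' * \<Psi> (Suc (na + k)) \<sigma>'))"
    unfolding expect_def by (simp only: sum_dist_mult add_Suc_right)
  then show ?thesis unfolding expect_def bellman_def by (simp add: sum.distrib distrib_left)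
qed

lemma sum_expect_le:
  assumes "\<And>k \<sigma>. K0 \<le> k \<Longrightarrow> reachable \<alpha> (na + k) \<sigma> \<Longrightarrow> bellman \<alpha> f \<Psi> (na + k) \<sigma> \<le> \<Psi> (na + k) \<sigma>"
  shows "(\<Sum>j<J. expect \<alpha> f (K0 + j)) \<le> expect \<alpha> \<Psi> K0 - expect \<alpha> \<Psi> (K0 + J)"
proof (induction J)
  case (Suc J)
  have "expect \<alpha> (bellman \<alpha> f \<Psi>) (K0 + J) \<le> expect \<alpha> \<Psi> (K0 + J)"
    by (rule expect_mono) (use assms in auto)
  then show ?case using Suc expect_bellman[of \<alpha> f "K0 + J" \<Psi>] by simp
qed simp

lemma sum_expect_eq:
  assumes "\<And>k \<sigma>. K0 \<le> k \<Longrightarrow> reachable \<alpha> (na + k) \<sigma> \<Longrightarrow> bellman \<alpha> f \<Psi> (na + k) \<sigma> = \<Psi> (na + k) \<sigma>"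
  shows "(\<Sum>j<J. expect \<alpha> f (K0 + j)) = expect \<alpha> \<Psi> K0 - expect \<alpha> \<Psi> (K0 + J)"
proof (induction J)
  case (Suc J)
  have "expect \<alpha> (bellman \<alpha> f \<Psi>) (K0 + J) = expect \<alpha> \<Psi> (K0 + J)"
    by (rule expect_cong) (use assms in auto)
  then show ?case using Suc expect_bellman[of \<alpha> f "K0 + J" \<Psi>] by simp
qed simp

lemma suminf_expect_le:
  assumes "\<And>k \<sigma>. K0 \<le> k \<Longrightarrow> reachable \<alpha> (na + k) \<sigma> \<Longrightarrow> bellman \<alpha> f \<Psi> (na + k) \<sigma> \<le> \<Psi> (na + k) \<sigma>"
    and "summable (\<lambda>j. expect \<alpha> f (K0 + j))" and "\<forall>\<^sub>F k in sequentially. 0 \<le> expect \<alpha> \<Psi> k"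
  shows "(\<Sum>j. expect \<alpha> f (K0 + j)) \<le> expect \<alpha> \<Psi> K0"
proof (rule LIMSEQ_le_const2[OF summable_LIMSEQ[OF assms(2)]])
  obtain K1 where K1: "\<And>k. K1 \<le> k \<Longrightarrow> 0 \<le> expect \<alpha> \<Psi> k"
    using assms(3) by (auto simp: eventually_sequentially)
  show "\<exists>N. \<forall>J\<ge>N. (\<Sum>j<J. expect \<alpha> f (K0 + j)) \<le> expect \<alpha> \<Psi> K0"
  proof (intro exI allI impI)
    fix J assume "K1 \<le> J"
    then have "0 \<le> expect \<alpha> \<Psi> (K0 + J)" using K1 by simp
    then show "(\<Sum>j<J. expect \<alpha> f (K0 + j)) \<le> expect \<alpha> \<Psi> K0"
      using sum_expect_le[of K0 \<alpha> f \<Psi> J, OF assms(1)] by linarith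
  qed
qed

lemma expect_sums:
  assumes "\<And>k \<sigma>. K0 \<le> k \<Longrightarrow> reachable \<alpha> (na + k) \<sigma> \<Longrightarrow> bellman \<alpha> f \<Psi> (na + k) \<sigma> = \<Psi> (na + k) \<sigma>"
    and "(\<lambda>j. expect \<alpha> \<Psi> (K0 + j)) \<longlonglongrightarrow> 0"
  shows "(\<lambda>j. expect \<alpha> f (K0 + j)) sums expect \<alpha> \<Psi> K0"
proof -
  have "(\<lambda>J. expect \<alpha> \<Psi> K0 - expect \<alpha> \<Psi> (K0 + J)) \<longlonglongrightarrow> expect \<alpha> \<Psi> K0 - 0"
    by (intro tendsto_diff tendsto_const assms(2))
  then show ?thesis unfolding sums_def using sum_expect_eq[OF assms(1)] by simp
qed

lemma expect_tendsto_zero: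
  assumes "\<forall>\<^sub>F n in sequentially. \<forall>\<sigma>. reachable \<alpha> n \<sigma> \<longrightarrow> 0 \<le> \<Psi> n \<sigma> \<and> \<Psi> n \<sigma> \<le> K * \<gamma> ^ n"
  shows "(\<lambda>j. expect \<alpha> \<Psi> (K0 + j)) \<longlonglongrightarrow> 0"
proof (rule tendsto_sandwich[where f="\<lambda>_. 0" and h="\<lambda>j. K * \<gamma> ^ (na + K0) * \<gamma> ^ j"])
  obtain N where N: "\<And>n \<sigma>. N \<le> n \<Longrightarrow> reachable \<alpha> n \<sigma> \<Longrightarrow> 0 \<le> \<Psi> n \<sigma> \<and> \<Psi> n \<sigma> \<le> K * \<gamma> ^ n"
    using assms unfolding eventually_sequentially by blast
  have "0 \<le> expect \<alpha> \<Psi> (K0 + j) \<and> expect \<alpha> \<Psi> (K0 + j) \<le> K * \<gamma> ^ (na + K0) * \<gamma> ^ j"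
    if "N \<le> j" for j
  proof
    show "0 \<le> expect \<alpha> \<Psi> (K0 + j)"
      using expect_mono[of \<alpha> "K0 + j" "\<lambda>_ _. 0" \<Psi>] N that by (simp add: expect_const)
    have "expect \<alpha> \<Psi> (K0 + j) \<le> expect \<alpha> (\<lambda>_ _. K * \<gamma> ^ (na + K0 + j)) (K0 + j)"
      by (rule expect_mono) (use N[of "na + (K0 + j)"] that in \<open>simp add: add.assoc\<close>)
    then show "expect \<alpha> \<Psi> (K0 + j) \<le> K * \<gamma> ^ (na + K0) * \<gamma> ^ j"
      by (simp add: expect_const power_add mult.assoc)
  qed
  then show "\<forall>\<^sub>F j in sequentially. 0 \<le> expect \<alpha> \<Psi> (K0 + j)"
    and "\<forall>\<^sub>F j in sequentially. expect \<alpha> \<Psi> (K0 + j) \<le> K * \<gamma> ^ (na + K0) * \<gamma> ^ j"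
    by (auto simp: eventually_sequentially)
  show "(\<lambda>_. 0) \<longlonglongrightarrow> (0::real)" by simp
  show "(\<lambda>j. K * \<gamma> ^ (na + K0) * \<gamma> ^ j) \<longlonglongrightarrow> 0"
    using \<gamma>_pos \<gamma>_less_1 by (intro tendsto_mult_right_zero LIMSEQ_power_zero) auto
qed

lemma utility_le_splice:
  fixes M :: nat and \<beta> \<alpha>0 :: strategy and \<Psi> :: "nat \<Rightarrow> state \<Rightarrow> real"
  defines "\<alpha> \<equiv> splice M \<beta> \<alpha>0"
  assumes M: "na \<le> M" and fin_\<beta>: "exp_payment m p tau \<beta> \<noteq> top"
    and bellman_\<beta>: "\<And>n \<sigma>. M \<le> n \<Longrightarrow> reachable \<beta> n \<sigma> \<Longrightarrow> bellman \<beta> (net_gain p \<beta>) \<Psi> n \<sigma> \<le> \<Psi> n \<sigma>"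
    and nonneg_\<beta>: "\<forall>\<^sub>F n in sequentially. \<forall>\<sigma>. reachable \<beta> n \<sigma> \<longrightarrow> 0 \<le> \<Psi> n \<sigma>"
    and fin_\<alpha>: "\<And>n \<sigma>. M \<le> n \<Longrightarrow> reachable \<alpha> n \<sigma> \<Longrightarrow> payment m p n (\<alpha> n \<sigma>) \<noteq> top"
    and bellman_\<alpha>: "\<And>n \<sigma>. M \<le> n \<Longrightarrow> reachable \<alpha> n \<sigma> \<Longrightarrow> bellman \<alpha> (net_gain p \<alpha>) \<Psi> n \<sigma> = \<Psi> n \<sigma>"
    and bound_\<alpha>: "\<forall>\<^sub>F n in sequentially. \<forall>\<sigma>. reachable \<alpha> n \<sigma> \<longrightarrow> 0 \<le> \<Psi> n \<sigma> \<and> \<Psi> n \<sigma> \<le> K * \<gamma> ^ n"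
  shows "utility m q1 q2 p tau \<beta> \<le> utility m q1 q2 p tau \<alpha>"
proof -
  define K0 where "K0 = M - na"
  have K0: "na + K0 = M" using M by (simp add: K0_def)
  define X where "X \<gamma>' = expect \<gamma>' (net_gain p \<gamma>')" for \<gamma>'
  have ds_eq: "ds \<alpha> k = ds \<beta> k" if "k \<le> K0" for k
    using dist_splice_prefix[OF M] that by (simp add: \<alpha>_def K0_def)
  have X_eq: "X \<alpha> k = X \<beta> k" if "k < K0" for k
    using ds_eq[of k] that K0 by (simp add: X_def expect_def net_gain_def \<alpha>_def splice_def)
  have \<Psi>_eq: "expect \<alpha> \<Psi> K0 = expect \<beta> \<Psi> K0"
    using ds_eq[of K0] by (simp add: expect_def)
  have fin_\<alpha>': "payment m p n (\<alpha> n \<sigma>) \<noteq> top" if "reachable \<alpha> n \<sigma>" for n \<sigma>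
  proof (cases "M \<le> n")
    case False
    then show ?thesis
      using that reachable_splice_iff[OF M, of n \<beta> \<alpha>0] payment_finite_of_reachable[OF fin_\<beta>]
      by (simp add: \<alpha>_def splice_def)
  qed (use fin_\<alpha> that in blast)
  have sums_\<alpha>: "(\<lambda>j. X \<alpha> (K0 + j)) sums expect \<alpha> \<Psi> K0"
    unfolding X_def
  proof (rule expect_sums)
    show "bellman \<alpha> (net_gain p \<alpha>) \<Psi> (na + k) \<sigma> = \<Psi> (na + k) \<sigma>"
      if "K0 \<le> k" "reachable \<alpha> (na + k) \<sigma>" for k \<sigma>
      using bellman_\<alpha> that K0 by simp
  qed (rule expect_tendsto_zero[OF bound_\<alpha>])
  have summable_\<alpha>: "summable (X \<alpha>)"
    using sums_summable[OF sums_\<alpha>] summable_iff_shift[of "X \<alpha>" K0] by (simp add: add.commute)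
  have summable_\<beta>: "summable (X \<beta>)"
    unfolding X_def by (rule summable_expect_net_gain[OF fin_\<beta>])
  have tail_\<beta>: "(\<Sum>j. X \<beta> (K0 + j)) \<le> expect \<beta> \<Psi> K0"
    unfolding X_def
  proof (rule suminf_expect_le)
    show "bellman \<beta> (net_gain p \<beta>) \<Psi> (na + k) \<sigma> \<le> \<Psi> (na + k) \<sigma>"
      if "K0 \<le> k" "reachable \<beta> (na + k) \<sigma>" for k \<sigma>
      using bellman_\<beta> that K0 by simp
    show "summable (\<lambda>j. expect \<beta> (net_gain p \<beta>) (K0 + j))"
      using summable_\<beta> summable_iff_shift[of "X \<beta>" K0] by (simp add: X_def add.commute)
    obtain N where "\<And>n \<sigma>. N \<le> n \<Longrightarrow> reachable \<beta> n \<sigma> \<Longrightarrow> 0 \<le> \<Psi> n \<sigma>"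
      using nonneg_\<beta> unfolding eventually_sequentially by blast
    then have "0 \<le> expect \<beta> \<Psi> k" if "N \<le> k" for k
      using expect_mono[of \<beta> k "\<lambda>_ _. 0" \<Psi>] that by (simp add: expect_const)
    then show "\<forall>\<^sub>F k in sequentially. 0 \<le> expect \<beta> \<Psi> k"
      by (auto simp: eventually_sequentially)
  qed
  have split: "suminf (X \<gamma>') = (\<Sum>j. X \<gamma>' (K0 + j)) + (\<Sum>k<K0. X \<gamma>' k)"
    if "summable (X \<gamma>')" for \<gamma>'
    using suminf_split_initial_segment[OF that, of K0] by (simp add: add.commute)
  have "suminf (X \<beta>) \<le> suminf (X \<alpha>)"
    unfolding split[OF summable_\<beta>] split[OF summable_\<alpha>] sums_unique[OF sums_\<alpha>, symmetric]
    using tail_\<beta> \<Psi>_eq X_eq by simp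
  moreover have "utility m q1 q2 p tau \<alpha> = ereal (suminf (X \<alpha>))"
    using utility_eq_suminf[OF fin_\<alpha>'] summable_\<alpha> by (simp add: X_def)
  moreover have "utility m q1 q2 p tau \<beta> = ereal (suminf (X \<beta>))"
    using utility_eq_suminf[OF payment_finite_of_reachable[OF fin_\<beta>]] summable_\<beta>
    by (simp add: X_def)
  ultimately show ?thesis by simp
qed

end


context user_model
begin

lemma enn2real_payment:
  assumes "payment m p n (s, b1, b2) \<noteq> top" "m \<le> n"
  shows "enn2real (payment m p n (s, b1, b2)) =
    of_bool s * enn2real (priceS p) + of_bool b1 * enn2real (fst (snd p)) + of_bool b2 * enn2real (price2 p)"
  using assms
  by (cases s; cases b1; cases b2)
     (simp_all add: payment_def price1_def subs_def buy1_def buy2_def enn2real_plus less_top[symmetric])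

lemma price_finite_of_action:
  assumes "exp_payment m p tau \<alpha> \<noteq> top" "reachable \<alpha> n \<sigma>" "m \<le> n"
  shows "subs (\<alpha> n \<sigma>) \<Longrightarrow> priceS p \<noteq> top" "buy1 (\<alpha> n \<sigma>) \<Longrightarrow> fst (snd p) \<noteq> top"
    "buy2 (\<alpha> n \<sigma>) \<Longrightarrow> price2 p \<noteq> top"
  using payment_finite_of_reachable[OF assms(1,2)] assms(3)
  by (auto simp: payment_def price1_def)

fun step_value :: "prices \<Rightarrow> (nat \<Rightarrow> state \<Rightarrow> real) \<Rightarrow> nat \<Rightarrow> state \<Rightarrow> action \<Rightarrow> real" where
  "step_value p \<Psi> n (d, o1, o2) (s, b1, b2) =
     v * (of_bool d * (if s then Q1 n + Q2 n else of_bool (o1 \<or> b1) * Q1 n + of_bool (o2 \<or> b2) * Q2 n))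
     - (of_bool s * enn2real (priceS p) + of_bool b1 * enn2real (fst (snd p))
        + of_bool b2 * enn2real (price2 p))
     + (keep_prob (d, o1, o2) (s, b1, b2) * \<Psi> (Suc n) (True, o1 \<or> b1, o2 \<or> b2)
        + (1 - keep_prob (d, o1, o2) (s, b1, b2)) * \<Psi> (Suc n) (False, o1 \<or> b1, o2 \<or> b2))"

lemma bellman_net_gain:
  assumes "m \<le> n" "payment m p n (\<alpha> n \<sigma>) \<noteq> top"
  shows "bellman \<alpha> (net_gain p \<alpha>) \<Psi> n \<sigma> = step_value p \<Psi> n \<sigma> (\<alpha> n \<sigma>)"
proof -
  obtain d o1 o2 s b1 b2 where \<sigma>: "\<sigma> = (d, o1, o2)" and a: "\<alpha> n \<sigma> = (s, b1, b2)"
    by (cases \<sigma>, cases "\<alpha> n \<sigma>") auto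
  have "Suc n \<noteq> m" using assms(1) by simp
  then show ?thesis
    using assms unfolding bellman_def net_gain_def sum_trans_mult[OF \<open>Suc n \<noteq> m\<close>] a
    by (simp add: \<sigma> enn2real_payment reward_def qual_eq oS_def dem_def own_def subs_def buy1_def buy2_def)
qed

definition late_start :: nat where "late_start = max na m"

lemma late_start_ge: "na \<le> late_start" "m \<le> late_start"
  by (simp_all add: late_start_def)

lemma late_start_le: "m \<le> n \<Longrightarrow> reachable \<alpha> n \<sigma> \<Longrightarrow> late_start \<le> n"
  by (simp add: late_start_def reachable_iff)

end

section \<open>Users who buy the upgrade\<close>

context user_model
begin

definition buy_missing :: strategy where
  "buy_missing n \<sigma> = (False, \<not> fst (own \<sigma>), \<not> snd (own \<sigma>))"

definition missing_cost :: "prices \<Rightarrow> bool \<times> bool \<Rightarrow> real" where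
  "missing_cost p o' = of_bool (\<not> fst o') * enn2real (fst (snd p)) + of_bool (\<not> snd o') * enn2real (price2 p)"

definition value_upgrade :: "prices \<Rightarrow> nat \<Rightarrow> state \<Rightarrow> real" where
  "value_upgrade p n \<sigma> = of_bool (dem \<sigma>) * (v * disc_qual (True, True) n) - missing_cost p (own \<sigma>)"

lemma disc_qual_all_rec:
  "v * disc_qual (True, True) n = v * (Q1 n + Q2 n) + \<delta> * (v * disc_qual (True, True) (Suc n))"
  using disc_qual_rec[of "(True, True)" n] by (simp add: qual_eq)

lemma step_value_upgrade_le: "step_value p (value_upgrade p) n \<sigma> a \<le> value_upgrade p n \<sigma>"
proof -
  obtain d o1 o2 s b1 b2 where \<sigma>: "\<sigma> = (d, o1, o2)" and a: "a = (s, b1, b2)"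
    by (cases \<sigma>, cases a) auto
  define pd where "pd = keep_prob (d, o1, o2) (s, b1, b2)"
  define rew where "rew = (if s then Q1 n + Q2 n else of_bool (o1 \<or> b1) * Q1 n + of_bool (o2 \<or> b2) * Q2 n)"
  define V where "V k = v * disc_qual (True, True) k" for k
  have next_value: "pd * value_upgrade p (Suc n) (True, o1 \<or> b1, o2 \<or> b2)
      + (1 - pd) * value_upgrade p (Suc n) (False, o1 \<or> b1, o2 \<or> b2)
      = pd * V (Suc n) - missing_cost p (o1 \<or> b1, o2 \<or> b2)"
    by (simp add: value_upgrade_def V_def dem_def own_def algebra_simps)
  have cost: "missing_cost p (o1, o2) - missing_cost p (o1 \<or> b1, o2 \<or> b2) \<le>
      of_bool s * enn2real (priceS p) + of_bool b1 * enn2real (fst (snd p)) + of_bool b2 * enn2real (price2 p)"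
    unfolding missing_cost_def by (cases s; cases o1; cases b1; cases o2; cases b2) simp_all
  have rew: "0 \<le> rew" "rew \<le> Q1 n + Q2 n"
    using Q1_pos[of n] Q2_pos[of n] unfolding rew_def
    by (cases s; cases "o1 \<or> b1"; cases "o2 \<or> b2"; simp)+
  have "v * (of_bool d * rew) + pd * V (Suc n) \<le> of_bool d * V n"
  proof (cases "d \<and> (s \<or> o1 \<or> b1 \<or> o2 \<or> b2)")
    case True
    then have "pd = \<delta>" by (simp add: pd_def)
    moreover have "v * rew \<le> v * (Q1 n + Q2 n)" using rew v_nonneg by (simp add: mult_left_mono)
    ultimately show ?thesis using disc_qual_all_rec[of n] True by (simp add: V_def)
  next
    case False
    then have "pd = of_bool d" "d \<Longrightarrow> rew = 0" by (auto simp: pd_def rew_def)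
    moreover have "V (Suc n) \<le> V n"
      using disc_qual_Suc_le v_nonneg by (simp add: V_def mult_left_mono)
    ultimately show ?thesis by (cases d) simp_all
  qed
  then show ?thesis
    using cost unfolding \<sigma> a step_value.simps pd_def[symmetric] rew_def[symmetric] next_value
    by (simp add: value_upgrade_def V_def dem_def own_def)
qed

lemma step_value_upgrade_buy_missing:
  "step_value p (value_upgrade p) n \<sigma> (buy_missing n \<sigma>) = value_upgrade p n \<sigma>"
proof -
  obtain d o1 o2 where \<sigma>: "\<sigma> = (d, o1, o2)" by (cases \<sigma>)
  show ?thesis
    using disc_qual_all_rec[of n] unfolding \<sigma>
    by (cases d) (auto simp: buy_missing_def value_upgrade_def missing_cost_def dem_def own_def
        algebra_simps)
qed

lemma no_upgrade_until_late_start: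
  assumes "admissible m \<beta>" "reachable \<beta> n \<sigma>" "n \<le> late_start"
  shows "\<not> snd (own \<sigma>)"
proof -
  have "n \<le> late_start \<longrightarrow> \<not> snd (own \<sigma>)"
  proof (rule reachable_induct[where P="\<lambda>n \<sigma>. n \<le> late_start \<longrightarrow> \<not> snd (own \<sigma>)", OF assms(2)])
    fix n \<sigma> \<sigma>'
    assume r: "reachable \<beta> n \<sigma>" and t: "0 < tr n \<sigma> (\<beta> n \<sigma>) \<sigma>'"
      and IH: "n \<le> late_start \<longrightarrow> \<not> snd (own \<sigma>)"
    have "Suc n \<le> late_start \<Longrightarrow> n < m"
      using reachable_ge[OF r] by (simp add: late_start_def)
    then have "Suc n \<le> late_start \<Longrightarrow> \<not> buy2 (\<beta> n \<sigma>)"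
      using assms(1) unfolding admissible_def by blast
    then show "Suc n \<le> late_start \<longrightarrow> \<not> snd (own \<sigma>')"
      using trans_pos_own[OF t] IH by simp
  qed (simp add: own_def)
  then show ?thesis using assms(3) by blast
qed

lemma owns_all_after_late_start:
  assumes "late_start < n" "reachable (splice late_start \<beta> buy_missing) n \<sigma>"
  shows "own \<sigma> = (True, True)"
proof -
  obtain n' where n: "n = Suc n'" "late_start \<le> n'" using assms(1) by (cases n) auto
  then have "na \<le> n'" using late_start_ge(1) by linarith
  then obtain \<sigma>0 where "0 < tr n' \<sigma>0 (splice late_start \<beta> buy_missing n' \<sigma>0) \<sigma>"
    using reachable_pred[OF assms(2)[unfolded n(1)]] by blast
  then show ?thesis using trans_pos_own n(2) by (simp add: splice_def buy_missing_def buy1_def buy2_def)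
qed

lemma class_upgrade_owns_eventually:
  assumes "\<beta> \<in> class_upgrade m tau"
  obtains N where "late_start \<le> N" "\<And>n \<sigma>. N \<le> n \<Longrightarrow> reachable \<beta> n \<sigma> \<Longrightarrow> own \<sigma> = (True, True)"
proof -
  obtain N0 where N0: "na \<le> N0" "\<And>\<sigma>. reachable \<beta> N0 \<sigma> \<Longrightarrow> own \<sigma> = (True, True)"
    using assms unfolding class_upgrade_def tau_simps by blast
  have "own \<sigma> = (True, True)" if "max N0 late_start \<le> n" "reachable \<beta> n \<sigma>" for n \<sigma>
    by (rule reachable_induct_from[where P="\<lambda>_ \<sigma>. own \<sigma> = (True, True)", OF N0(1) _ that(2)])
       (use that(1) N0(2) trans_pos_own in auto)
  then show thesis using that[of "max N0 late_start"] by simp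
qed

lemma value_upgrade_bounds:
  assumes "own \<sigma> = (True, True)"
  shows "0 \<le> value_upgrade p n \<sigma>" "value_upgrade p n \<sigma> \<le> v * qual_bound / (1 - \<delta> * \<gamma>) * \<gamma> ^ n"
  using assms disc_qual_le[of "(True, True)" n]
    mult_nonneg_nonneg[OF v_nonneg disc_qual_nonneg[of "(True, True)" n]]
  by (auto simp: value_upgrade_def missing_cost_def)

lemma splice_buy_missing_in_class:
  assumes "admissible m \<beta>"
  shows "splice late_start \<beta> buy_missing \<in> class_upgrade m tau"
  unfolding class_upgrade_def
  using admissible_splice[OF late_start_ge(2) assms] owns_all_after_late_start[of "Suc late_start"]
    late_start_ge
  by (auto intro!: exI[of _ "Suc late_start"])

lemma price_finite_of_missing:
  assumes fin: "exp_payment m p tau \<beta> \<noteq> top" and r: "reachable \<beta> late_start \<sigma>"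
    and "late_start \<le> N" and N: "\<And>\<sigma>'. reachable \<beta> N \<sigma>' \<Longrightarrow> own \<sigma>' = (True, True)"
  shows "\<not> fst (own \<sigma>) \<Longrightarrow> fst (snd p) \<noteq> top" "\<not> snd (own \<sigma>) \<Longrightarrow> price2 p \<noteq> top"
proof -
  have exits: "\<exists>k \<sigma>'. late_start \<le> k \<and> reachable \<beta> k \<sigma>' \<and> b (\<beta> k \<sigma>')"
    if missing: "\<not> c (own \<sigma>)" and owned: "c (True, True)"
      and keeps: "\<And>\<sigma> a. \<not> c (own \<sigma>) \<Longrightarrow> \<not> b a \<Longrightarrow> \<not> c (fst (own \<sigma>) \<or> buy1 a, snd (own \<sigma>) \<or> buy2 a)"
    for c b
  proof (rule reachable_exit_action[where P="\<lambda>\<sigma>. \<not> c (own \<sigma>)", OF r missing \<open>late_start \<le> N\<close>])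
    show "\<not> \<not> c (own \<sigma>')" if "reachable \<beta> N \<sigma>'" for \<sigma>' using N[OF that] owned by simp
    fix k \<sigma>
    assume "\<not> c (own \<sigma>)" "\<not> b (\<beta> k \<sigma>)"
    moreover obtain \<sigma>' where "0 < tr k \<sigma> (\<beta> k \<sigma>) \<sigma>'" using trans_pos_ex by blast
    ultimately show "\<exists>\<sigma>'. \<not> c (own \<sigma>') \<and> 0 < tr k \<sigma> (\<beta> k \<sigma>) \<sigma>'"
      using trans_pos_own keeps by metis
  qed
  show "fst (snd p) \<noteq> top" if "\<not> fst (own \<sigma>)"
    using exits[of fst buy1] that price_finite_of_action(2)[OF fin] late_start_ge(2)
    by (metis fst_conv le_trans)
  show "price2 p \<noteq> top" if "\<not> snd (own \<sigma>)"
    using exits[of snd buy2] that price_finite_of_action(3)[OF fin] late_start_ge(2)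
    by (metis snd_conv le_trans)
qed

lemma bellman_upgrade_le:
  assumes "exp_payment m p tau \<beta> \<noteq> top" "late_start \<le> n" "reachable \<beta> n \<sigma>"
  shows "bellman \<beta> (net_gain p \<beta>) (value_upgrade p) n \<sigma> \<le> value_upgrade p n \<sigma>"
  unfolding bellman_net_gain[of n p \<beta> \<sigma>, OF order_trans[OF late_start_ge(2) assms(2)]
      payment_finite_of_reachable[OF assms(1,3)]]
  by (rule step_value_upgrade_le)

lemma bellman_upgrade_buy_missing:
  assumes "late_start \<le> n" "payment m p n (splice late_start \<beta> buy_missing n \<sigma>) \<noteq> top"
  shows "bellman (splice late_start \<beta> buy_missing) (net_gain p (splice late_start \<beta> buy_missing))
      (value_upgrade p) n \<sigma> = value_upgrade p n \<sigma>"
proof -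
  have "splice late_start \<beta> buy_missing n \<sigma> = buy_missing n \<sigma>"
    using assms(1) by (simp add: splice_def)
  then show ?thesis
    unfolding bellman_net_gain[of n p "splice late_start \<beta> buy_missing" \<sigma>,
        OF order_trans[OF late_start_ge(2) assms(1)] assms(2)]
    by (simp only: step_value_upgrade_buy_missing)
qed

lemma utility_le_splice_buy_missing:
  assumes \<beta>: "\<beta> \<in> class_upgrade m tau"
  shows "utility m q1 q2 p tau \<beta> \<le> utility m q1 q2 p tau (splice late_start \<beta> buy_missing)"
proof (cases "exp_payment m p tau \<beta> = top")
  case fin: False
  define \<alpha> where "\<alpha> = splice late_start \<beta> buy_missing"
  obtain N where N_ge: "late_start \<le> N"
    and owns: "\<And>n \<sigma>. N \<le> n \<Longrightarrow> reachable \<beta> n \<sigma> \<Longrightarrow> own \<sigma> = (True, True)"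
    using class_upgrade_owns_eventually[OF \<beta>] by blast
  have \<alpha>_late: "\<alpha> n \<sigma> = buy_missing n \<sigma>" if "late_start \<le> n" for n \<sigma>
    using that by (simp add: \<alpha>_def splice_def)
  have owns_\<alpha>: "own \<sigma> = (True, True)" if "late_start < n" "reachable \<alpha> n \<sigma>" for n \<sigma>
    using owns_all_after_late_start that by (simp add: \<alpha>_def)
  have fin_\<alpha>: "payment m p n (\<alpha> n \<sigma>) \<noteq> top" if "late_start \<le> n" "reachable \<alpha> n \<sigma>" for n \<sigma>
  proof (cases "n = late_start")
    case True
    then have "reachable \<beta> late_start \<sigma>"
      using that reachable_splice_iff[OF late_start_ge(1)] by (simp add: \<alpha>_def)
    then show ?thesis
      using price_finite_of_missing[OF fin _ N_ge owns[OF order_refl]] \<alpha>_late[OF that(1)] True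
      by (auto simp: buy_missing_def payment_def price1_def subs_def buy1_def buy2_def late_start_def)
  next
    case False
    then show ?thesis using owns_\<alpha>[of n \<sigma>] that \<alpha>_late[OF that(1)]
      by (simp add: buy_missing_def payment_def subs_def buy1_def buy2_def)
  qed
  have "utility m q1 q2 p tau \<beta> \<le> utility m q1 q2 p tau \<alpha>"
    unfolding \<alpha>_def
  proof (rule utility_le_splice[OF late_start_ge(1) fin, where \<Psi>="value_upgrade p"
        and K="v * qual_bound / (1 - \<delta> * \<gamma>)"])
    show "bellman \<beta> (net_gain p \<beta>) (value_upgrade p) n \<sigma> \<le> value_upgrade p n \<sigma>"
      if "late_start \<le> n" "reachable \<beta> n \<sigma>" for n \<sigma>
      using bellman_upgrade_le[OF fin that] .
    show "\<forall>\<^sub>F n in sequentially. \<forall>\<sigma>. reachable \<beta> n \<sigma> \<longrightarrow> 0 \<le> value_upgrade p n \<sigma>"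
      using value_upgrade_bounds(1)[OF owns] by (intro eventually_sequentiallyI[of N]) simp
    show "payment m p n (splice late_start \<beta> buy_missing n \<sigma>) \<noteq> top"
      if "late_start \<le> n" "reachable (splice late_start \<beta> buy_missing) n \<sigma>" for n \<sigma>
      using fin_\<alpha> that by (simp add: \<alpha>_def)
    show "bellman (splice late_start \<beta> buy_missing) (net_gain p (splice late_start \<beta> buy_missing))
        (value_upgrade p) n \<sigma> = value_upgrade p n \<sigma>"
      if "late_start \<le> n" "reachable (splice late_start \<beta> buy_missing) n \<sigma>" for n \<sigma>
      by (rule bellman_upgrade_buy_missing[OF that(1)]) (use fin_\<alpha> that in \<open>simp add: \<alpha>_def\<close>)
    show "\<forall>\<^sub>F n in sequentially. \<forall>\<sigma>. reachable (splice late_start \<beta> buy_missing) n \<sigma> \<longrightarrow>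
        0 \<le> value_upgrade p n \<sigma> \<and> value_upgrade p n \<sigma> \<le> v * qual_bound / (1 - \<delta> * \<gamma>) * \<gamma> ^ n"
    proof (rule eventually_sequentiallyI[of "Suc late_start"], intro allI impI)
      fix n \<sigma> assume "Suc late_start \<le> n" "reachable (splice late_start \<beta> buy_missing) n \<sigma>"
      then show "0 \<le> value_upgrade p n \<sigma> \<and> value_upgrade p n \<sigma> \<le> v * qual_bound / (1 - \<delta> * \<gamma>) * \<gamma> ^ n"
        using value_upgrade_bounds[OF owns_\<alpha>[of n \<sigma>]] by (simp add: \<alpha>_def)
    qed
  qed
  then show ?thesis by (simp add: \<alpha>_def)
qed (simp add: utility_def)

lemma optimal_upgrade:
  "\<exists>\<alpha>. optimal_in (class_upgrade m tau) (utility m q1 q2 p tau) \<alpha> \<and>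
     (\<forall>\<sigma>. reachable \<alpha> (max na m) \<sigma> \<longrightarrow>
        buy2 (\<alpha> (max na m) \<sigma>) \<and> (fst (own \<sigma>) \<or> buy1 (\<alpha> (max na m) \<sigma>))) \<and>
     (\<forall>n\<ge>m. \<forall>\<sigma>. reachable \<alpha> n \<sigma> \<longrightarrow> \<not> subs (\<alpha> n \<sigma>))"
proof -
  have "\<exists>\<beta>\<in>class_upgrade m tau.
      optimal_in (class_upgrade m tau) (utility m q1 q2 p tau) (splice late_start \<beta> buy_missing)"
  proof (rule optimal_in_splice_exists)
    have "splice late_start (\<lambda>_ _. (False, False, False)) buy_missing \<in> class_upgrade m tau"
      by (rule splice_buy_missing_in_class) (simp add: admissible_def buy2_def)
    then show "class_upgrade m tau \<noteq> {}" by blast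
    show "splice late_start \<beta> buy_missing \<in> class_upgrade m tau" if "\<beta> \<in> class_upgrade m tau" for \<beta>
      using that splice_buy_missing_in_class by (simp add: class_upgrade_def)
  qed (rule utility_le_splice_buy_missing)
  then obtain \<beta> where
    opt: "optimal_in (class_upgrade m tau) (utility m q1 q2 p tau) (splice late_start \<beta> buy_missing)"
    by blast
  define \<alpha> where "\<alpha> = splice late_start \<beta> buy_missing"
  have adm: "admissible m \<alpha>" using opt by (simp add: \<alpha>_def optimal_in_def class_upgrade_def)
  have "buy2 (\<alpha> late_start \<sigma>)" if "reachable \<alpha> late_start \<sigma>" for \<sigma>
    using no_upgrade_until_late_start[OF adm that]
    by (simp add: \<alpha>_def splice_def buy_missing_def buy2_def)
  moreover have "\<not> subs (\<alpha> n \<sigma>)" if "m \<le> n" "reachable \<alpha> n \<sigma>" for n \<sigma>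
    using late_start_le[OF that] by (simp add: \<alpha>_def splice_def buy_missing_def subs_def)
  ultimately show ?thesis
    using opt unfolding \<alpha>_def[symmetric]
    by (auto simp: late_start_def \<alpha>_def splice_def buy_missing_def buy1_def)
qed

end


section \<open>Discounted sums of declining gains\<close>

context user_model
begin

definition disc_sum :: "(nat \<Rightarrow> real) \<Rightarrow> enat \<Rightarrow> nat \<Rightarrow> real" where
  "disc_sum c T n = (\<Sum>j. \<delta> ^ j * (if enat (n + j) < T then c (n + j) else 0))"

lemma geometric_sums_const: "(\<lambda>j. \<delta> ^ j * K) sums (K / (1 - \<delta>))"
  using sums_mult2[OF geometric_sums[of \<delta>], of K] \<delta>_pos \<delta>_less_1 by simp

end

locale declining_gain = user_model +
  fixes c :: "nat \<Rightarrow> real" and T :: enat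
  assumes gain_nonneg: "\<And>k. m \<le> k \<Longrightarrow> enat k < T \<Longrightarrow> 0 \<le> c k"
    and gain_Suc_le: "\<And>k. m \<le> k \<Longrightarrow> c (Suc k) \<le> c k"
begin

abbreviation D :: "nat \<Rightarrow> real" where "D \<equiv> disc_sum c T"

lemma gain_antimono: "m \<le> n \<Longrightarrow> n \<le> k \<Longrightarrow> c k \<le> c n"
  using lift_Suc_antimono_le_ivl[of "{m..}" c n k] gain_Suc_le by fastforce

lemma disc_sum_term_bounds:
  assumes "m \<le> n"
  shows "0 \<le> \<delta> ^ j * (if enat (n + j) < T then c (n + j) else 0)"
    and "\<delta> ^ j * (if enat (n + j) < T then c (n + j) else 0) \<le> \<delta> ^ j * max 0 (c n)"
  using gain_nonneg[of "n + j"] gain_antimono[of n "n + j"] assms \<delta>_pos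
  by (auto intro!: mult_left_mono)

lemma summable_disc_sum: "m \<le> n \<Longrightarrow> summable (\<lambda>j. \<delta> ^ j * (if enat (n + j) < T then c (n + j) else 0))"
  by (rule summable_comparison_test'[OF sums_summable[OF geometric_sums_const[of "max 0 (c n)"]]])
     (use disc_sum_term_bounds in auto)

lemma disc_sum_nonneg: "m \<le> n \<Longrightarrow> 0 \<le> D n"
  unfolding disc_sum_def by (intro suminf_nonneg summable_disc_sum disc_sum_term_bounds)

lemma disc_sum_le: "m \<le> n \<Longrightarrow> D n \<le> max 0 (c n) / (1 - \<delta>)"
  unfolding disc_sum_def
  by (rule sums_le[OF _ summable_sums[OF summable_disc_sum] geometric_sums_const])
     (use disc_sum_term_bounds in auto)

lemma disc_sum_eq_0: "T \<le> enat n \<Longrightarrow> D n = 0"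
proof -
  assume "T \<le> enat n"
  then have "\<not> enat (n + j) < T" for j by (metis enat_ord_simps(1) le_add1 not_le order.trans)
  then show ?thesis by (simp add: disc_sum_def)
qed

lemma disc_sum_rec: "m \<le> n \<Longrightarrow> D n = (if enat n < T then c n else 0) + \<delta> * D (Suc n)"
proof -
  assume mn: "m \<le> n"
  let ?f = "\<lambda>j. \<delta> ^ j * (if enat (n + j) < T then c (n + j) else 0)"
  have "(\<lambda>j. ?f (Suc j)) = (\<lambda>j. \<delta> * (\<delta> ^ j * (if enat (Suc n + j) < T then c (Suc n + j) else 0)))"
    by (rule ext) simp
  then have "(\<Sum>j. ?f (Suc j)) = \<delta> * D (Suc n)"
    using suminf_mult[OF summable_disc_sum[of "Suc n"], of \<delta>] mn by (simp add: disc_sum_def)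
  moreover have "(\<Sum>j. ?f (Suc j)) = suminf ?f - ?f 0"
    by (rule suminf_split_head[OF summable_disc_sum[OF mn]])
  ultimately show ?thesis by (simp add: disc_sum_def)
qed

lemma disc_sum_Suc_le_gain: "m \<le> n \<Longrightarrow> enat n < T \<Longrightarrow> (1 - \<delta>) * D (Suc n) \<le> c n"
proof -
  assume n: "m \<le> n" "enat n < T"
  have pos: "0 < 1 - \<delta>" using \<delta>_less_1 by linarith
  have "max 0 (c (Suc n)) \<le> c n" using gain_nonneg[OF n] gain_Suc_le[OF n(1)] by simp
  then have "max 0 (c (Suc n)) / (1 - \<delta>) \<le> c n / (1 - \<delta>)"
    using pos by (rule divide_right_mono[OF _ less_imp_le])
  then have "D (Suc n) \<le> c n / (1 - \<delta>)" using disc_sum_le[of "Suc n"] n(1) by linarith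
  then have "D (Suc n) * (1 - \<delta>) \<le> c n" by (simp only: pos_le_divide_eq[OF pos])
  then show ?thesis by (simp only: mult.commute)
qed

lemma disc_sum_Suc_le: "m \<le> n \<Longrightarrow> D (Suc n) \<le> D n"
proof (cases "enat n < T")
  case True
  assume "m \<le> n"
  then show ?thesis
    using disc_sum_Suc_le_gain[OF _ True] disc_sum_rec[OF \<open>m \<le> n\<close>] True by (simp add: algebra_simps)
next
  case False
  then have "T \<le> enat n" "T \<le> enat (Suc n)"
    using order.trans[of T "enat n" "enat (Suc n)"] by (auto simp: not_less)
  then show ?thesis using disc_sum_eq_0 by simp
qed

lemma disc_sum_mono_gain:
  assumes "\<And>k. m \<le> k \<Longrightarrow> enat k < T \<Longrightarrow> 0 \<le> c' k \<and> c' k \<le> c k" and "m \<le> n"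
  shows "disc_sum c' T n \<le> D n"
proof -
  have le: "\<delta> ^ j * (if enat (n + j) < T then c' (n + j) else 0)
      \<le> \<delta> ^ j * (if enat (n + j) < T then c (n + j) else 0)" for j
    using assms(1)[of "n + j"] assms(2) \<delta>_pos by (auto intro!: mult_left_mono)
  have "0 \<le> \<delta> ^ j * (if enat (n + j) < T then c' (n + j) else 0)" for j
    using assms(1)[of "n + j"] assms(2) \<delta>_pos by auto
  then have "summable (\<lambda>j. \<delta> ^ j * (if enat (n + j) < T then c' (n + j) else 0))"
    by (intro summable_comparison_test'[OF summable_disc_sum[OF assms(2)]]) (use le in auto)
  then show ?thesis unfolding disc_sum_def by (rule suminf_le[OF le _ summable_disc_sum[OF assms(2)]])
qed

end

section \<open>Users who buy nothing after the release\<close>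

context user_model
begin

text \<open>The gain of subscribing over using the owned access \<open>o\<close> alone; \<open>-1\<close> encodes that no
  subscription is offered.\<close>

definition subscription_gain :: "prices \<Rightarrow> bool \<times> bool \<Rightarrow> nat \<Rightarrow> real" where
  "subscription_gain p o' k =
     (if priceS p = top then -1 else v * qual m q1 q2 \<gamma> (compl_own o') k - enn2real (priceS p))"

lemma subscription_gain_Suc_le: "subscription_gain p o' (Suc k) \<le> subscription_gain p o' k"
  using qual_nonneg[of "compl_own o'" k] \<gamma>_pos \<gamma>_less_1 v_nonneg
  by (simp add: subscription_gain_def qual_Suc mult_left_le_one_le mult_left_mono)

lemma subscription_gain_le: "max 0 (subscription_gain p o' k) \<le> v * qual_bound * \<gamma> ^ k"
  using mult_left_mono[OF qual_le_bound[of "compl_own o'" k] v_nonneg]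
    mult_nonneg_nonneg[OF v_nonneg qual_bound_nonneg[of k]] enn2real_nonneg[of "priceS p"]
  by (auto simp: subscription_gain_def mult.assoc simp del: enn2real_nonneg)

lemma less_n2_iff:
  "m \<le> k \<Longrightarrow> enat k < n2 m q1 q2 p tau o' \<longleftrightarrow> 0 \<le> subscription_gain p o' k"
  unfolding n2_def Let_def
proof (rule enat_less_least_iff_nonneg[where a="subscription_gain p o'"])
  show "(m \<le> n \<and> ennreal (val tau) < priceS p / ennreal (qual m q1 q2 (dec tau) (compl_own o') n)) \<longleftrightarrow>
        m \<le> n \<and> subscription_gain p o' n < 0" for n
    using ennreal_less_divide_iff[OF v_nonneg qual_nonneg[of "compl_own o'" n], of "priceS p"]
    by (auto simp: subscription_gain_def)
qed (simp_all add: subscription_gain_Suc_le)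

lemma declining_subscription_gain:
  "declining_gain m q1 q2 \<delta> \<gamma> v (subscription_gain p o') (n2 m q1 q2 p tau o')"
  by unfold_locales (auto simp: less_n2_iff subscription_gain_Suc_le)

definition value_nobuy :: "prices \<Rightarrow> bool \<times> bool \<Rightarrow> nat \<Rightarrow> state \<Rightarrow> real" where
  "value_nobuy p o' n \<sigma> =
     of_bool (dem \<sigma>) * (v * disc_qual o' n + disc_sum (subscription_gain p o') (n2 m q1 q2 p tau o') n)"

definition subscribe_until_n2 :: "prices \<Rightarrow> bool \<times> bool \<Rightarrow> strategy" where
  "subscribe_until_n2 p o' n \<sigma> = (dem \<sigma> \<and> enat n < n2 m q1 q2 p tau o', False, False)"

lemma step_value_nobuy:
  assumes "own \<sigma> = o'" "\<not> buy1 a" "\<not> buy2 a"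
  shows "step_value p (value_nobuy p o') n \<sigma> a =
    v * (of_bool (dem \<sigma>) * (if subs a then qual m q1 q2 \<gamma> o' n + qual m q1 q2 \<gamma> (compl_own o') n
                              else qual m q1 q2 \<gamma> o' n))
    - of_bool (subs a) * enn2real (priceS p)
    + keep_prob \<sigma> a * (v * disc_qual o' (Suc n)
                          + disc_sum (subscription_gain p o') (n2 m q1 q2 p tau o') (Suc n))"
proof -
  obtain d o1 o2 s where "\<sigma> = (d, o1, o2)" "a = (s, False, False)" "o' = (o1, o2)"
    using assms by (cases \<sigma>, cases a) (auto simp: own_def buy1_def buy2_def)
  then show ?thesis
    using qual_add_compl[of n o'] by (simp add: value_nobuy_def dem_def subs_def qual_eq)
qed

lemma step_value_nobuy_le:
  assumes "m \<le> n" "own \<sigma> = o'" "\<not> buy1 a" "\<not> buy2 a" "subs a \<Longrightarrow> priceS p \<noteq> top"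
  shows "step_value p (value_nobuy p o') n \<sigma> a \<le> value_nobuy p o' n \<sigma>"
proof -
  interpret declining_gain m q1 q2 \<delta> \<gamma> v na "subscription_gain p o'" "n2 m q1 q2 p tau o'"
    by (rule declining_subscription_gain)
  define g where "g = subscription_gain p o' n"
  define qo where "qo = qual m q1 q2 \<gamma> o' n"
  define qc where "qc = qual m q1 q2 \<gamma> (compl_own o') n"
  define W where "W k = v * disc_qual o' k" for k
  have value_eq: "value_nobuy p o' n \<sigma> =
      of_bool (dem \<sigma>) * (v * qo + \<delta> * W (Suc n) + (if 0 \<le> g then g else 0) + \<delta> * D (Suc n))"
    using disc_sum_rec[OF assms(1)] disc_qual_rec[of o' n] less_n2_iff[OF assms(1)]
    by (simp add: value_nobuy_def W_def qo_def g_def)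
  have step: "step_value p (value_nobuy p o') n \<sigma> a =
      v * (of_bool (dem \<sigma>) * (if subs a then qo + qc else qo)) - of_bool (subs a) * enn2real (priceS p)
      + keep_prob \<sigma> a * (W (Suc n) + D (Suc n))"
    using step_value_nobuy[OF assms(2-4)] by (simp add: W_def qo_def qc_def)
  show ?thesis
  proof (cases "dem \<sigma>")
    case False
    then have "keep_prob \<sigma> a = 0" by (cases \<sigma>; cases a) (simp add: dem_def)
    then show ?thesis using False by (simp add: step value_eq)
  next
    case True
    consider "subs a" | "\<not> subs a" "o' \<noteq> (False, False)" | "\<not> subs a" "o' = (False, False)" by blast
    then show ?thesis
    proof cases
      case 1
      then have "keep_prob \<sigma> a = \<delta>" "g = v * qc - enn2real (priceS p)"
        using True assms(5) by (cases \<sigma>; cases a; simp add: dem_def subs_def g_def qc_def subscription_gain_def)+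
      then show ?thesis using 1 True by (simp add: step value_eq algebra_simps)
    next
      case 2
      then have "keep_prob \<sigma> a = \<delta>"
        using True assms(2-4) by (cases \<sigma>; cases a) (auto simp: dem_def subs_def own_def buy1_def buy2_def)
      then show ?thesis using 2 True by (simp add: step value_eq algebra_simps)
    next
      case 3
      then have "keep_prob \<sigma> a = 1" "qo = 0" "W (Suc n) = 0"
        using True assms(2-4)
        by (cases \<sigma>; cases a; simp add: dem_def subs_def own_def buy1_def buy2_def qo_def W_def
            qual_eq disc_qual_none)+
      moreover have "D (Suc n) \<le> (if 0 \<le> g then g else 0) + \<delta> * D (Suc n)"
      proof -
        have "D n = (if 0 \<le> g then g else 0) + \<delta> * D (Suc n)"
          using disc_sum_rec[OF assms(1)] less_n2_iff[OF assms(1)] by (simp add: g_def)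
        then show ?thesis using disc_sum_Suc_le[OF assms(1)] by linarith
      qed
      ultimately show ?thesis using 3(1) True unfolding step value_eq by simp
    qed
  qed
qed

lemma step_value_nobuy_subscribe_until_n2:
  assumes "m \<le> n" "own \<sigma> = o'" "subs (subscribe_until_n2 p o' n \<sigma>) \<Longrightarrow> priceS p \<noteq> top"
  shows "step_value p (value_nobuy p o') n \<sigma> (subscribe_until_n2 p o' n \<sigma>) = value_nobuy p o' n \<sigma>"
proof -
  interpret declining_gain m q1 q2 \<delta> \<gamma> v na "subscription_gain p o'" "n2 m q1 q2 p tau o'"
    by (rule declining_subscription_gain)
  define T where "T = n2 m q1 q2 p tau o'"
  define a where "a = subscribe_until_n2 p o' n \<sigma>"
  define g where "g = subscription_gain p o' n"
  define qo where "qo = qual m q1 q2 \<gamma> o' n"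
  define qc where "qc = qual m q1 q2 \<gamma> (compl_own o') n"
  define W where "W k = v * disc_qual o' k" for k
  have subs: "subs a \<longleftrightarrow> dem \<sigma> \<and> enat n < T"
    by (simp add: a_def subscribe_until_n2_def subs_def T_def)
  have value_eq: "value_nobuy p o' n \<sigma> =
      of_bool (dem \<sigma>) * (v * qo + \<delta> * W (Suc n) + (if enat n < T then g else 0) + \<delta> * D (Suc n))"
    using disc_sum_rec[OF assms(1)] disc_qual_rec[of o' n]
    by (simp add: value_nobuy_def W_def qo_def g_def T_def)
  have step: "step_value p (value_nobuy p o') n \<sigma> a =
      v * (of_bool (dem \<sigma>) * (if subs a then qo + qc else qo)) - of_bool (subs a) * enn2real (priceS p)
      + keep_prob \<sigma> a * (W (Suc n) + D (Suc n))"
    using step_value_nobuy[OF assms(2)] by (simp add: a_def subscribe_until_n2_def buy1_def buy2_def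
        W_def qo_def qc_def)
  have keep: "keep_prob \<sigma> a = (if dem \<sigma> \<and> (subs a \<or> o' \<noteq> (False, False)) then \<delta> else of_bool (dem \<sigma>))"
    using assms(2) by (cases \<sigma>) (auto simp: a_def subscribe_until_n2_def dem_def subs_def own_def)
  show ?thesis
    unfolding a_def[symmetric]
  proof (cases "dem \<sigma> \<and> enat n < T")
    case True
    then have "g = v * qc - enn2real (priceS p)"
      using assms(3) subs by (simp add: a_def g_def qc_def subscription_gain_def)
    then show "step_value p (value_nobuy p o') n \<sigma> a = value_nobuy p o' n \<sigma>"
      using True subs keep by (simp add: step value_eq algebra_simps)
  next
    case False
    have "T \<le> enat n \<Longrightarrow> D n = 0 \<and> D (Suc n) = 0"
      using disc_sum_eq_0[of n] disc_sum_eq_0[of "Suc n"] order.trans[of T "enat n" "enat (Suc n)"]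
      by (simp add: T_def)
    moreover have "o' = (False, False) \<Longrightarrow> qo = 0 \<and> W k = 0" for k
      by (simp add: qo_def W_def qual_eq disc_qual_none)
    ultimately show "step_value p (value_nobuy p o') n \<sigma> a = value_nobuy p o' n \<sigma>"
      using False subs keep disc_sum_rec[OF assms(1)] disc_qual_rec[of o' n]
      by (cases "dem \<sigma>") (auto simp: step value_eq not_less T_def W_def qo_def)
  qed
qed

lemma value_nobuy_bounds:
  assumes "m \<le> n"
  shows "0 \<le> value_nobuy p o' n \<sigma>"
    and "value_nobuy p o' n \<sigma> \<le> v * qual_bound * (1 / (1 - \<delta> * \<gamma>) + 1 / (1 - \<delta>)) * \<gamma> ^ n"
proof -
  interpret declining_gain m q1 q2 \<delta> \<gamma> v na "subscription_gain p o'" "n2 m q1 q2 p tau o'"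
    by (rule declining_subscription_gain)
  have "D n \<le> max 0 (subscription_gain p o' n) / (1 - \<delta>)" by (rule disc_sum_le[OF assms])
  also have "\<dots> \<le> v * qual_bound * \<gamma> ^ n / (1 - \<delta>)"
    using subscription_gain_le \<delta>_less_1 by (simp add: divide_right_mono)
  finally have "D n \<le> v * qual_bound * \<gamma> ^ n / (1 - \<delta>)" .
  moreover have "0 \<le> v * disc_qual o' n" "0 \<le> D n"
    using v_nonneg disc_qual_nonneg disc_sum_nonneg[OF assms] by simp_all
  moreover note disc_qual_le[of o' n]
  ultimately show "0 \<le> value_nobuy p o' n \<sigma>"
    and "value_nobuy p o' n \<sigma> \<le> v * qual_bound * (1 / (1 - \<delta> * \<gamma>) + 1 / (1 - \<delta>)) * \<gamma> ^ n"
    by (auto simp: value_nobuy_def algebra_simps add_divide_distrib)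
qed

lemma splice_subscribe_in_class_nobuy:
  assumes \<beta>: "\<beta> \<in> class_nobuy m tau o'"
  shows "splice late_start \<beta> (subscribe_until_n2 p o') \<in> class_nobuy m tau o'"
proof -
  define \<alpha> where "\<alpha> = splice late_start \<beta> (subscribe_until_n2 p o')"
  have \<alpha>_late: "\<alpha> n \<sigma> = subscribe_until_n2 p o' n \<sigma>" if "late_start \<le> n" for n \<sigma>
    using that by (simp add: \<alpha>_def splice_def)
  have own_\<alpha>: "own \<sigma> = o'" if "late_start \<le> n" "reachable \<alpha> n \<sigma>" for n \<sigma>
    using late_start_ge(1) that(1,2)
  proof (induction rule: reachable_induct_from)
    case (init \<sigma>)
    then have "reachable \<beta> late_start \<sigma>"
      using reachable_splice_iff[OF late_start_ge(1)] by (simp add: \<alpha>_def)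
    then show ?case using \<beta> late_start_ge(2) unfolding class_nobuy_def by blast
  next
    case (step n \<sigma> \<sigma>')
    then show ?case
      using trans_pos_own[OF step(3)] \<alpha>_late[OF step(1)] by (simp add: subscribe_until_n2_def buy1_def buy2_def)
  qed
  moreover have "admissible m \<alpha>"
    using admissible_splice[OF late_start_ge(2)] \<beta> by (simp add: \<alpha>_def class_nobuy_def)
  moreover have "\<forall>n\<ge>m. \<forall>\<sigma>. reachable \<alpha> n \<sigma> \<longrightarrow> own \<sigma> = o' \<and> \<not> buy1 (\<alpha> n \<sigma>) \<and> \<not> buy2 (\<alpha> n \<sigma>)"
  proof (intro allI impI)
    fix n \<sigma> assume "m \<le> n" "reachable \<alpha> n \<sigma>"
    moreover from this have "late_start \<le> n" by (rule late_start_le)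
    ultimately show "own \<sigma> = o' \<and> \<not> buy1 (\<alpha> n \<sigma>) \<and> \<not> buy2 (\<alpha> n \<sigma>)"
      using own_\<alpha> \<alpha>_late by (simp add: subscribe_until_n2_def buy1_def buy2_def)
  qed
  ultimately show ?thesis unfolding \<alpha>_def[symmetric] class_nobuy_def by blast
qed

lemma bellman_nobuy_le:
  assumes "\<beta> \<in> class_nobuy m tau o'" "exp_payment m p tau \<beta> \<noteq> top" "late_start \<le> n" "reachable \<beta> n \<sigma>"
  shows "bellman \<beta> (net_gain p \<beta>) (value_nobuy p o') n \<sigma> \<le> value_nobuy p o' n \<sigma>"
proof -
  have mn: "m \<le> n" using assms(3) late_start_ge(2) by linarith
  have "own \<sigma> = o'" "\<not> buy1 (\<beta> n \<sigma>)" "\<not> buy2 (\<beta> n \<sigma>)"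
    using assms(1,4) mn unfolding class_nobuy_def by blast+
  then show ?thesis
    unfolding bellman_net_gain[of n p \<beta> \<sigma>, OF mn payment_finite_of_reachable[OF assms(2,4)]]
    by (rule step_value_nobuy_le[OF mn _ _ _ price_finite_of_action(1)[OF assms(2,4) mn]])
qed

lemma bellman_nobuy_subscribe_until_n2:
  assumes "late_start \<le> n" "own \<sigma> = o'"
    and pay: "payment m p n (splice late_start \<beta> (subscribe_until_n2 p o') n \<sigma>) \<noteq> top"
  shows "bellman (splice late_start \<beta> (subscribe_until_n2 p o'))
      (net_gain p (splice late_start \<beta> (subscribe_until_n2 p o'))) (value_nobuy p o') n \<sigma> =
    value_nobuy p o' n \<sigma>"
proof -
  have mn: "m \<le> n" using assms(1) late_start_ge(2) by linarith
  have eq: "splice late_start \<beta> (subscribe_until_n2 p o') n \<sigma> = subscribe_until_n2 p o' n \<sigma>"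
    using assms(1) by (simp add: splice_def)
  show ?thesis
    unfolding bellman_net_gain[of n p "splice late_start \<beta> (subscribe_until_n2 p o')" \<sigma>, OF mn pay] eq
    by (rule step_value_nobuy_subscribe_until_n2[OF mn assms(2)]) (use pay eq in \<open>auto simp: payment_def\<close>)
qed

lemma utility_le_splice_subscribe:
  assumes \<beta>: "\<beta> \<in> class_nobuy m tau o'"
  shows "utility m q1 q2 p tau \<beta> \<le> utility m q1 q2 p tau (splice late_start \<beta> (subscribe_until_n2 p o'))"
proof (cases "exp_payment m p tau \<beta> = top")
  case fin: False
  define \<alpha> where "\<alpha> = splice late_start \<beta> (subscribe_until_n2 p o')"
  define K where "K = v * qual_bound * (1 / (1 - \<delta> * \<gamma>) + 1 / (1 - \<delta>))"
  have m_le: "m \<le> n" if "late_start \<le> n" for n using that late_start_ge(2) by linarith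
  have \<alpha>: "\<alpha> \<in> class_nobuy m tau o'"
    using splice_subscribe_in_class_nobuy[OF \<beta>] by (simp add: \<alpha>_def)
  have \<alpha>_late: "\<alpha> n \<sigma> = subscribe_until_n2 p o' n \<sigma>" if "late_start \<le> n" for n \<sigma>
    using that by (simp add: \<alpha>_def splice_def)
  have own: "own \<sigma> = o'" if "\<gamma>' \<in> class_nobuy m tau o'" "late_start \<le> n" "reachable \<gamma>' n \<sigma>" for \<gamma>' n \<sigma>
    using that(1,3) m_le[OF that(2)] unfolding class_nobuy_def by blast
  have fin_\<alpha>: "payment m p n (\<alpha> n \<sigma>) \<noteq> top" if "late_start \<le> n" for n \<sigma>
  proof -
    have "priceS p \<noteq> top" if "enat n < n2 m q1 q2 p tau o'"
      using that less_n2_iff[OF m_le[OF \<open>late_start \<le> n\<close>]] by (auto simp: subscription_gain_def)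
    then show ?thesis
      using \<alpha>_late[OF that] by (auto simp: subscribe_until_n2_def payment_def subs_def buy1_def buy2_def)
  qed
  have "utility m q1 q2 p tau \<beta> \<le> utility m q1 q2 p tau \<alpha>"
    unfolding \<alpha>_def
  proof (rule utility_le_splice[OF late_start_ge(1) fin, where \<Psi>="value_nobuy p o'" and K=K])
    show "bellman \<beta> (net_gain p \<beta>) (value_nobuy p o') n \<sigma> \<le> value_nobuy p o' n \<sigma>"
      if "late_start \<le> n" "reachable \<beta> n \<sigma>" for n \<sigma>
      using bellman_nobuy_le[OF \<beta> fin that] .
    show "\<forall>\<^sub>F n in sequentially. \<forall>\<sigma>. reachable \<beta> n \<sigma> \<longrightarrow> 0 \<le> value_nobuy p o' n \<sigma>"
      using value_nobuy_bounds(1) m_le by (intro eventually_sequentiallyI[of late_start]) simp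
    show "payment m p n (splice late_start \<beta> (subscribe_until_n2 p o') n \<sigma>) \<noteq> top"
      if "late_start \<le> n" "reachable (splice late_start \<beta> (subscribe_until_n2 p o')) n \<sigma>" for n \<sigma>
      using fin_\<alpha>[OF that(1)] by (simp add: \<alpha>_def)
    show "bellman (splice late_start \<beta> (subscribe_until_n2 p o'))
        (net_gain p (splice late_start \<beta> (subscribe_until_n2 p o'))) (value_nobuy p o') n \<sigma> =
        value_nobuy p o' n \<sigma>"
      if "late_start \<le> n" "reachable (splice late_start \<beta> (subscribe_until_n2 p o')) n \<sigma>" for n \<sigma>
      using bellman_nobuy_subscribe_until_n2[OF that(1) own[OF \<alpha> that[folded \<alpha>_def]]] fin_\<alpha>[OF that(1)]
      by (simp add: \<alpha>_def)
    show "\<forall>\<^sub>F n in sequentially. \<forall>\<sigma>. reachable (splice late_start \<beta> (subscribe_until_n2 p o')) n \<sigma> \<longrightarrow>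
        0 \<le> value_nobuy p o' n \<sigma> \<and> value_nobuy p o' n \<sigma> \<le> K * \<gamma> ^ n"
      using value_nobuy_bounds m_le unfolding K_def by (intro eventually_sequentiallyI[of late_start]) simp
  qed
  then show ?thesis by (simp add: \<alpha>_def)
qed (simp add: utility_def)

lemma optimal_nobuy:
  assumes "class_nobuy m tau o' \<noteq> {}"
  shows "\<exists>\<alpha>. optimal_in (class_nobuy m tau o') (utility m q1 q2 p tau) \<alpha> \<and>
     (\<forall>n \<ge> m. \<forall>\<sigma>. reachable \<alpha> n \<sigma> \<longrightarrow>
        (dem \<sigma> \<and> enat n < n2 m q1 q2 p tau o' \<longrightarrow> subs (\<alpha> n \<sigma>)) \<and>
        (n2 m q1 q2 p tau o' \<le> enat n \<longrightarrow> \<not> subs (\<alpha> n \<sigma>)))"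
proof -
  have "\<exists>\<beta>\<in>class_nobuy m tau o'. optimal_in (class_nobuy m tau o') (utility m q1 q2 p tau)
      (splice late_start \<beta> (subscribe_until_n2 p o'))"
    by (rule optimal_in_splice_exists[OF assms])
       (simp_all add: splice_subscribe_in_class_nobuy utility_le_splice_subscribe)
  then obtain \<beta> where "optimal_in (class_nobuy m tau o') (utility m q1 q2 p tau)
      (splice late_start \<beta> (subscribe_until_n2 p o'))"
    by blast
  moreover have "splice late_start \<beta> (subscribe_until_n2 p o') n \<sigma> = subscribe_until_n2 p o' n \<sigma>"
    if "m \<le> n" "reachable (splice late_start \<beta> (subscribe_until_n2 p o')) n \<sigma>" for n \<sigma>
    using late_start_le[OF that] by (simp add: splice_def)
  ultimately show ?thesis by (fastforce simp: subscribe_until_n2_def subs_def)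
qed

end


section \<open>Users who buy only the base product after the release\<close>

context user_model
begin

lemma no_upgrade_in_class_base:
  assumes "\<beta> \<in> class_base m tau" "reachable \<beta> n \<sigma>"
  shows "\<not> snd (own \<sigma>)"
proof (rule reachable_induct[where P="\<lambda>_ \<sigma>. \<not> snd (own \<sigma>)", OF assms(2)])
  fix n \<sigma> \<sigma>'
  assume r: "reachable \<beta> n \<sigma>" and t: "0 < tr n \<sigma> (\<beta> n \<sigma>) \<sigma>'" and "\<not> snd (own \<sigma>)"
  moreover have "\<not> buy2 (\<beta> n \<sigma>)"
  proof (cases "n < m")
    case True
    then show ?thesis using assms(1) unfolding class_base_def admissible_def by blast
  next
    case False
    then have "m \<le> n" by simp
    then show ?thesis using assms(1) r unfolding class_base_def by blast
  qed
  ultimately show "\<not> snd (own \<sigma>')" using trans_pos_own[OF t] by simp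
qed (simp add: own_def)

lemma reachable_demand_late_start: "\<exists>\<sigma>. reachable \<alpha> late_start \<sigma> \<and> dem \<sigma>"
proof (cases "m \<le> na")
  case True
  then show ?thesis using reachable_init by (auto simp: late_start_def dem_def)
next
  case False
  then have m: "late_start = Suc (m - 1)" "na \<le> m - 1" by (auto simp: late_start_def)
  obtain \<sigma>0 where r0: "reachable \<alpha> (m - 1) \<sigma>0" using reachable_ex m(2) by blast
  let ?\<sigma> = "(True, fst (own \<sigma>0) \<or> buy1 (\<alpha> (m - 1) \<sigma>0), snd (own \<sigma>0) \<or> buy2 (\<alpha> (m - 1) \<sigma>0))"
  have "0 < tr (m - 1) \<sigma>0 (\<alpha> (m - 1) \<sigma>0) ?\<sigma>" by (rule trans_pos_demand) (use False in simp)
  then have "reachable \<alpha> late_start ?\<sigma>" unfolding m(1) by (rule reachable_succ[OF r0])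
  then show ?thesis by (auto simp: dem_def)
qed

end

locale base_buyer = user_model +
  fixes p :: prices
  assumes cond3_ex: "\<exists>n. cond3 m q1 q2 p tau n"
begin

definition n3 :: nat where "n3 = (LEAST n. cond3 m q1 q2 p tau n)"

text \<open>The gain of subscribing in timestep \<open>k\<close> and deferring the purchase of the base product,
  which saves \<open>(1 - \<delta>) p\<^sub>1\<close> in expectation because demand may be lost meanwhile.\<close>

definition defer_gain :: "nat \<Rightarrow> real" where
  "defer_gain k = (if priceS p = top then -1
     else v * Q2 k - enn2real (priceS p) + (1 - \<delta>) * enn2real (fst (snd p)))"

definition upgrade_gain :: "nat \<Rightarrow> real" where
  "upgrade_gain k = max 0 (defer_gain k - (1 - \<delta>) * enn2real (fst (snd p)))"

lemma defer_gain_Suc_le: "defer_gain (Suc k) \<le> defer_gain k"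
  using Q2_pos[of k] \<gamma>_pos \<gamma>_less_1 v_nonneg
  by (simp add: defer_gain_def Q2_Suc mult_left_le_one_le mult_left_mono)

lemma cond3_iff: "cond3 m q1 q2 p tau n \<longleftrightarrow> m \<le> n \<and> defer_gain n < 0"
proof -
  have q: "qual m q1 q2 \<gamma> (False, True) n = Q2 n" by (simp add: qual_eq)
  have top_div: "top / ennreal (Q2 n) = top" by (simp add: ennreal_divide_eq_top_iff)
  have pos: "0 < 1 - \<delta>" using \<delta>_less_1 by simp
  show ?thesis
  proof (cases "priceS p = top")
    case True
    then show ?thesis by (simp add: cond3_def defer_gain_def q top_div)
  next
    case False
    then obtain PS where PS: "priceS p = ennreal PS" "0 \<le> PS" by (cases "priceS p") auto
    show ?thesis
    proof (cases "fst (snd p) = top")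
      case True
      then have "priceS p - ennreal (1 - \<delta>) * fst (snd p) = 0"
        using pos PS by (simp add: ennreal_mult_top)
      then show ?thesis using cond3_ex by (simp add: cond3_def)
    next
      case False
      then obtain P1 where P1: "fst (snd p) = ennreal P1" "0 \<le> P1" by (cases "fst (snd p)") auto
      have diff: "ennreal PS - ennreal (1 - \<delta>) * ennreal P1 = ennreal (PS - (1 - \<delta>) * P1)"
        using PS P1 pos by (simp add: ennreal_mult[symmetric] ennreal_minus)
      have "ennreal v < ennreal (PS - (1 - \<delta>) * P1) / ennreal (Q2 n) \<longleftrightarrow>
          v * Q2 n < enn2real (ennreal (PS - (1 - \<delta>) * P1))"
        using ennreal_less_divide_iff[OF v_nonneg less_imp_le[OF Q2_pos[of n]]] by simp
      also have "\<dots> \<longleftrightarrow> v * Q2 n < PS - (1 - \<delta>) * P1"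
        using mult_nonneg_nonneg[OF v_nonneg less_imp_le[OF Q2_pos[of n]]]
        by (cases "0 \<le> PS - (1 - \<delta>) * P1") (auto simp: ennreal_neg)
      finally show ?thesis using PS P1 \<open>priceS p \<noteq> top\<close>
        by (auto simp: cond3_def q diff defer_gain_def)
    qed
  qed
qed

lemma less_n3_iff: "m \<le> k \<Longrightarrow> k < n3 \<longleftrightarrow> 0 \<le> defer_gain k"
  using enat_less_least_iff_nonneg[OF cond3_iff defer_gain_Suc_le] cond3_ex by (simp add: n3_def)

lemma n3_ge: "m \<le> n3"
  using LeastI_ex[OF cond3_ex] by (simp add: n3_def cond3_def)

sublocale defer_sum: declining_gain m q1 q2 \<delta> \<gamma> v na defer_gain "enat n3"
  by unfold_locales (simp_all add: less_n3_iff defer_gain_Suc_le)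

sublocale upgrade_sum: declining_gain m q1 q2 \<delta> \<gamma> v na upgrade_gain "enat n3"
proof unfold_locales
  show "upgrade_gain (Suc k) \<le> upgrade_gain k" for k
    unfolding upgrade_gain_def using defer_gain_Suc_le[of k] by (intro max.mono) simp_all
qed (simp add: upgrade_gain_def)

lemma upgrade_le_defer: "m \<le> n \<Longrightarrow> upgrade_sum.D n \<le> defer_sum.D n"
  using \<delta>_less_1 less_n3_iff
  by (intro defer_sum.disc_sum_mono_gain) (auto simp: upgrade_gain_def)

definition value_base :: "nat \<Rightarrow> state \<Rightarrow> real" where
  "value_base n \<sigma> =
     (if \<not> dem \<sigma> then 0
      else if fst (own \<sigma>) then v * disc_qual (True, False) n + upgrade_sum.D n
      else v * disc_qual (True, False) n - enn2real (fst (snd p)) + defer_sum.D n)"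

definition subscribe_then_buy :: strategy where
  "subscribe_then_buy n \<sigma> =
     (if \<not> dem \<sigma> then (False, False, False)
      else if n < n3 then (True, False, False) else (False, \<not> fst (own \<sigma>), False))"

lemma value_base_simps:
  "value_base k (False, o1, o2) = 0"
  "value_base k (True, True, o2) = v * disc_qual (True, False) k + upgrade_sum.D k"
  "value_base k (True, False, o2) = v * disc_qual (True, False) k - enn2real (fst (snd p)) + defer_sum.D k"
  by (simp_all add: value_base_def dem_def own_def)

lemma defer_gain_eq:
  "priceS p \<noteq> top \<Longrightarrow> defer_gain n = v * Q2 n - enn2real (priceS p) + (1 - \<delta>) * enn2real (fst (snd p))"
  by (simp add: defer_gain_def)

lemma disc_sums_eq_0:
  "\<not> n < n3 \<Longrightarrow> defer_sum.D n = 0 \<and> defer_sum.D (Suc n) = 0 \<and> upgrade_sum.D n = 0 \<and> upgrade_sum.D (Suc n) = 0"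
  using defer_sum.disc_sum_eq_0 upgrade_sum.disc_sum_eq_0 by (simp add: not_less)

lemma disc_qual_base_rec:
  "v * disc_qual (True, False) n = v * Q1 n + \<delta> * (v * disc_qual (True, False) (Suc n))"
  using disc_qual_rec[of "(True, False)" n] by (simp add: qual_eq)

lemma step_value_owner_le:
  assumes mn: "m \<le> n" and hs: "s \<Longrightarrow> priceS p \<noteq> top"
  shows "step_value p value_base n (True, True, False) (s, b1, False) \<le> value_base n (True, True, False)"
proof -
  define G where "G k = v * disc_qual (True, False) k" for k
  define c where "c = defer_gain n"
  define P1 where "P1 = enn2real (fst (snd p))"
  have H_rec: "upgrade_sum.D n = (if n < n3 then upgrade_gain n else 0) + \<delta> * upgrade_sum.D (Suc n)"
    using upgrade_sum.disc_sum_rec[OF mn] by simp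
  have P1: "0 \<le> P1" "0 \<le> (1 - \<delta>) * P1" using \<delta>_less_1 by (simp_all add: P1_def)
  have gain: "(if s then v * Q2 n - enn2real (priceS p) else 0) \<le> (if n < n3 then upgrade_gain n else 0)"
  proof (cases s)
    case True
    then have "c = v * Q2 n - enn2real (priceS p) + (1 - \<delta>) * P1"
      using hs by (simp add: c_def P1_def defer_gain_eq)
    then show ?thesis
      using True less_n3_iff[OF mn] P1 by (auto simp: upgrade_gain_def c_def P1_def)
  qed (simp add: upgrade_gain_def)
  show ?thesis
    using gain disc_qual_base_rec[of n] H_rec P1
    by (cases s; cases b1) (auto simp: value_base_simps P1_def algebra_simps simp del: enn2real_nonneg)
qed

lemma step_value_nonowner_le:
  assumes mn: "m \<le> n" and hs: "s \<Longrightarrow> priceS p \<noteq> top"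
  shows "step_value p value_base n (True, False, False) (s, b1, False) \<le> value_base n (True, False, False)"
proof -
  define c where "c = defer_gain n"
  define P1 where "P1 = enn2real (fst (snd p))"
  have D_rec: "defer_sum.D n = (if n < n3 then c else 0) + \<delta> * defer_sum.D (Suc n)"
    using defer_sum.disc_sum_rec[OF mn] by (simp add: c_def)
  have gain_iff: "n < n3 \<longleftrightarrow> 0 \<le> c" unfolding c_def by (rule less_n3_iff[OF mn])
  have c_eq: "s \<Longrightarrow> c = v * Q2 n - enn2real (priceS p) + (1 - \<delta>) * P1"
    using hs by (simp add: c_def P1_def defer_gain_eq)
  have P1: "0 \<le> P1" "0 \<le> (1 - \<delta>) * P1" using \<delta>_less_1 by (simp_all add: P1_def)
  have H_le: "\<delta> * upgrade_sum.D (Suc n) \<le> \<delta> * defer_sum.D (Suc n)"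
    using upgrade_le_defer[of "Suc n"] mn \<delta>_pos by simp
  have D_le: "\<delta> * defer_sum.D (Suc n) \<le> defer_sum.D n" using D_rec gain_iff by auto
  have G: "v * disc_qual (True, False) (Suc n) \<le> v * disc_qual (True, False) n"
    using disc_qual_Suc_le v_nonneg by (simp add: mult_left_mono)
  consider "s" "b1" | "s" "\<not> b1" | "\<not> s" "b1" | "\<not> s" "\<not> b1" by blast
  then show ?thesis
  proof cases
    case 1
    have "c - (1 - \<delta>) * P1 + \<delta> * upgrade_sum.D (Suc n) \<le> defer_sum.D n"
      using D_rec H_le P1 gain_iff disc_sums_eq_0[of n] by (cases "n < n3") auto
    then show ?thesis using 1 c_eq disc_qual_base_rec[of n]
      by (auto simp: value_base_simps P1_def algebra_simps simp del: enn2real_nonneg)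
  next
    case 2
    have "c + \<delta> * defer_sum.D (Suc n) \<le> defer_sum.D n" using D_rec gain_iff by auto
    then show ?thesis using 2 c_eq disc_qual_base_rec[of n]
      by (auto simp: value_base_simps P1_def algebra_simps simp del: enn2real_nonneg)
  next
    case 3
    then show ?thesis using H_le D_le disc_qual_base_rec[of n]
      by (auto simp: value_base_simps P1_def algebra_simps simp del: enn2real_nonneg)
  next
    case 4
    then show ?thesis using G defer_sum.disc_sum_Suc_le[OF mn]
      by (auto simp: value_base_simps P1_def algebra_simps simp del: enn2real_nonneg)
  qed
qed

lemma step_value_base_le:
  assumes "m \<le> n" "\<not> snd (own \<sigma>)" "\<not> buy2 a" "subs a \<Longrightarrow> priceS p \<noteq> top"
  shows "step_value p value_base n \<sigma> a \<le> value_base n \<sigma>"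
proof -
  obtain d o1 s b1 where \<sigma>: "\<sigma> = (d, o1, False)" and a: "a = (s, b1, False)"
    using assms(2,3) by (cases \<sigma>, cases a) (auto simp: own_def buy2_def)
  have hs: "s \<Longrightarrow> priceS p \<noteq> top" using assms(4) by (simp add: a subs_def)
  show ?thesis
  proof (cases d)
    case False
    then show ?thesis using enn2real_nonneg[of "priceS p"] enn2real_nonneg[of "fst (snd p)"]
      by (simp add: \<sigma> a value_base_simps del: enn2real_nonneg)
  next
    case True
    then show ?thesis
      using step_value_owner_le[OF assms(1) hs] step_value_nonowner_le[OF assms(1) hs]
      by (cases o1) (simp_all add: \<sigma> a)
  qed
qed

lemma step_value_base_subscribe_then_buy:
  assumes mn: "m \<le> n" and "\<not> snd (own \<sigma>)" and owner: "dem \<sigma> \<Longrightarrow> fst (own \<sigma>) \<Longrightarrow> n3 < n"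
    and hs: "subs (subscribe_then_buy n \<sigma>) \<Longrightarrow> priceS p \<noteq> top"
  shows "step_value p value_base n \<sigma> (subscribe_then_buy n \<sigma>) = value_base n \<sigma>"
proof -
  obtain d o1 where \<sigma>: "\<sigma> = (d, o1, False)" using assms(2) by (cases \<sigma>) (auto simp: own_def)
  have D_rec: "defer_sum.D n = (if n < n3 then defer_gain n else 0) + \<delta> * defer_sum.D (Suc n)"
    using defer_sum.disc_sum_rec[OF mn] by simp
  show ?thesis
  proof (cases "d \<and> \<not> o1 \<and> n < n3")
    case True
    then have "defer_gain n = v * Q2 n - enn2real (priceS p) + (1 - \<delta>) * enn2real (fst (snd p))"
      using hs by (simp add: \<sigma> subscribe_then_buy_def dem_def subs_def defer_gain_eq)
    then show ?thesis using True D_rec disc_qual_base_rec[of n]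
      by (simp add: \<sigma> subscribe_then_buy_def dem_def value_base_simps algebra_simps)
  next
    case False
    then have "d \<Longrightarrow> \<not> n < n3" using owner by (auto simp: \<sigma> dem_def own_def)
    then show ?thesis using False disc_sums_eq_0[of n] disc_qual_base_rec[of n]
      by (cases d; cases o1) (simp_all add: \<sigma> subscribe_then_buy_def dem_def own_def value_base_simps
          algebra_simps)
  qed
qed

lemma value_base_bounds:
  assumes "m \<le> n" "dem \<sigma> \<Longrightarrow> fst (own \<sigma>)"
  shows "0 \<le> value_base n \<sigma>"
    and "n3 \<le> n \<Longrightarrow> value_base n \<sigma> \<le> v * qual_bound / (1 - \<delta> * \<gamma>) * \<gamma> ^ n"
  using assms upgrade_sum.disc_sum_nonneg[OF assms(1)] upgrade_sum.disc_sum_eq_0[of n]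
    disc_qual_le[of "(True, False)" n] mult_nonneg_nonneg[OF v_nonneg disc_qual_nonneg[of "(True, False)" n]]
  by (auto simp: value_base_def)

lemma owns_base_after:
  assumes "max late_start n3 < n" "reachable (splice late_start \<beta> subscribe_then_buy) n \<sigma>" "dem \<sigma>"
  shows "fst (own \<sigma>)"
proof -
  obtain n' where n: "n = Suc n'" "max late_start n3 \<le> n'" using assms(1) by (cases n) auto
  then have "na \<le> n'" using late_start_ge(1) by linarith
  then obtain \<sigma>0 where t: "0 < tr n' \<sigma>0 (splice late_start \<beta> subscribe_then_buy n' \<sigma>0) \<sigma>"
    using reachable_pred[OF assms(2)[unfolded n(1)]] by blast
  have "Suc n' \<noteq> m" using n(2) late_start_ge(2) by linarith
  then have "dem \<sigma>0" using trans_pos_dem[OF t] assms(3) by blast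
  then have "splice late_start \<beta> subscribe_then_buy n' \<sigma>0 = (False, \<not> fst (own \<sigma>0), False)"
    using n(2) by (simp add: splice_def subscribe_then_buy_def)
  then show ?thesis using trans_pos_own[OF t] by (simp add: buy1_def)
qed

lemma owner_after_n3:
  assumes fresh: "\<And>\<sigma>. reachable \<beta> late_start \<sigma> \<Longrightarrow> \<not> fst (own \<sigma>)"
    and "late_start \<le> n" "reachable (splice late_start \<beta> subscribe_then_buy) n \<sigma>" "fst (own \<sigma>)"
  shows "n3 < n"
proof -
  have "fst (own \<sigma>) \<longrightarrow> n3 < n"
    using late_start_ge(1) assms(2,3)
  proof (induction rule: reachable_induct_from)
    case (init \<sigma>)
    then show ?case using fresh reachable_splice_iff[OF late_start_ge(1) order_refl] by simp
  next
    case (step n \<sigma> \<sigma>')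
    then show ?case
      using trans_pos_own[OF step(3)]
      by (auto simp: splice_def subscribe_then_buy_def buy1_def split: if_splits)
  qed
  then show ?thesis using assms(4) by blast
qed

lemma splice_subscribe_then_buy_in_class:
  assumes "admissible m \<beta>" "\<And>\<sigma>. reachable \<beta> late_start \<sigma> \<Longrightarrow> \<not> fst (own \<sigma>)"
  shows "splice late_start \<beta> subscribe_then_buy \<in> class_base m tau"
proof -
  define \<alpha> where "\<alpha> = splice late_start \<beta> subscribe_then_buy"
  have "admissible m \<alpha>" using admissible_splice[OF late_start_ge(2) assms(1)] by (simp add: \<alpha>_def)
  moreover have "\<forall>n\<ge>m. \<forall>\<sigma>. reachable \<alpha> n \<sigma> \<longrightarrow> \<not> buy2 (\<alpha> n \<sigma>)"
  proof (intro allI impI)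
    fix n \<sigma> assume "m \<le> n" "reachable \<alpha> n \<sigma>"
    then have "late_start \<le> n" by (rule late_start_le)
    then show "\<not> buy2 (\<alpha> n \<sigma>)" by (simp add: \<alpha>_def splice_def subscribe_then_buy_def buy2_def)
  qed
  moreover have "\<forall>\<sigma>. reachable \<alpha> (max (arr tau) m) \<sigma> \<longrightarrow> \<not> fst (own \<sigma>)"
    using assms(2) reachable_splice_iff[OF late_start_ge(1) order_refl]
    by (simp add: \<alpha>_def late_start_def)
  moreover have "\<forall>\<sigma>. reachable \<alpha> (Suc (max late_start n3)) \<sigma> \<longrightarrow> dem \<sigma> \<longrightarrow> fst (own \<sigma>)"
    using owns_base_after[of "Suc (max late_start n3)" \<beta>] by (simp add: \<alpha>_def)
  moreover have "arr tau \<le> Suc (max late_start n3)" using late_start_ge(1) by simp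
  ultimately show ?thesis unfolding \<alpha>_def[symmetric] class_base_def by blast
qed

lemma class_base_owns_eventually:
  assumes \<beta>: "\<beta> \<in> class_base m tau"
  obtains N where "late_start \<le> N" "\<And>n \<sigma>. N \<le> n \<Longrightarrow> reachable \<beta> n \<sigma> \<Longrightarrow> dem \<sigma> \<Longrightarrow> fst (own \<sigma>)"
proof -
  obtain N where N: "na \<le> N" "\<And>\<sigma>. reachable \<beta> N \<sigma> \<Longrightarrow> dem \<sigma> \<Longrightarrow> fst (own \<sigma>)"
    using \<beta> unfolding class_base_def tau_simps by blast
  have fresh: "\<not> fst (own \<sigma>)" if "reachable \<beta> late_start \<sigma>" for \<sigma>
    using \<beta> that unfolding class_base_def tau_simps late_start_def by blast
  have "late_start \<le> N"
  proof (rule ccontr)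
    assume "\<not> late_start \<le> N"
    have "\<exists>\<sigma>. reachable \<beta> N \<sigma> \<and> dem \<sigma>"
    proof (rule reachable_propagate[where P=dem, OF _ _ N(1)])
      show "reachable \<beta> na (True, False, False)" by (simp add: reachable_init)
      show "\<exists>\<sigma>'. dem \<sigma>' \<and> 0 < tr k \<sigma> (\<beta> k \<sigma>) \<sigma>'" if "dem \<sigma>" for k \<sigma>
        using trans_pos_demand[of \<sigma> k "\<beta> k \<sigma>"] that
        by (intro exI[of _ "(True, fst (own \<sigma>) \<or> buy1 (\<beta> k \<sigma>), snd (own \<sigma>) \<or> buy2 (\<beta> k \<sigma>))"])
           (simp add: dem_def)
    qed (simp add: dem_def)
    then obtain \<sigma>1 where "reachable \<beta> N \<sigma>1" "fst (own \<sigma>1)" using N(2) by blast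
    then have "\<exists>\<sigma>. reachable \<beta> late_start \<sigma> \<and> fst (own \<sigma>)"
    proof (rule reachable_propagate[where P="\<lambda>\<sigma>. fst (own \<sigma>)"])
      show "N \<le> late_start" using \<open>\<not> late_start \<le> N\<close> by simp
      show "\<exists>\<sigma>'. fst (own \<sigma>') \<and> 0 < tr k \<sigma> (\<beta> k \<sigma>) \<sigma>'" if "fst (own \<sigma>)" for k \<sigma>
      proof -
        obtain \<sigma>' where "0 < tr k \<sigma> (\<beta> k \<sigma>) \<sigma>'" using trans_pos_ex by blast
        then show ?thesis using trans_pos_own that by (intro exI[of _ \<sigma>']) simp
      qed
    qed
    then show False using fresh by blast
  qed
  moreover have "dem \<sigma> \<longrightarrow> fst (own \<sigma>)" if "N \<le> n" "reachable \<beta> n \<sigma>" for n \<sigma>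
    using N(1) that
  proof (induction rule: reachable_induct_from)
    case (init \<sigma>)
    then show ?case using N(2) by blast
  next
    case (step n \<sigma> \<sigma>')
    have "Suc n \<noteq> m" using step(1) \<open>late_start \<le> N\<close> late_start_ge(2) by linarith
    then show ?case using trans_pos_dem[OF step(3)] trans_pos_own[OF step(3)] step(4) by auto
  qed
  ultimately show thesis using that by blast
qed

lemma base_price_finite:
  assumes \<beta>: "\<beta> \<in> class_base m tau" and fin: "exp_payment m p tau \<beta> \<noteq> top"
  shows "fst (snd p) \<noteq> top"
proof -
  obtain N where N: "late_start \<le> N" "\<And>n \<sigma>. N \<le> n \<Longrightarrow> reachable \<beta> n \<sigma> \<Longrightarrow> dem \<sigma> \<Longrightarrow> fst (own \<sigma>)"
    using class_base_owns_eventually[OF \<beta>] by blast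
  obtain \<sigma>0 where \<sigma>0: "reachable \<beta> late_start \<sigma>0" "dem \<sigma>0" using reachable_demand_late_start by blast
  have "\<not> fst (own \<sigma>0)" using \<beta> \<sigma>0(1) unfolding class_base_def tau_simps late_start_def by blast
  have "\<exists>k \<sigma>'. late_start \<le> k \<and> reachable \<beta> k \<sigma>' \<and> buy1 (\<beta> k \<sigma>')"
  proof (rule reachable_exit_action[where P="\<lambda>\<sigma>. dem \<sigma> \<and> \<not> fst (own \<sigma>)", OF \<sigma>0(1) _ N(1)])
    show "dem \<sigma>0 \<and> \<not> fst (own \<sigma>0)" using \<sigma>0(2) \<open>\<not> fst (own \<sigma>0)\<close> by simp
    show "\<not> (dem \<sigma>' \<and> \<not> fst (own \<sigma>'))" if "reachable \<beta> N \<sigma>'" for \<sigma>'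
      using N(2)[OF order_refl that] by blast
    fix k \<sigma> assume "reachable \<beta> k \<sigma>" "dem \<sigma> \<and> \<not> fst (own \<sigma>)" "\<not> buy1 (\<beta> k \<sigma>)"
    let ?\<sigma> = "(True, fst (own \<sigma>) \<or> buy1 (\<beta> k \<sigma>), snd (own \<sigma>) \<or> buy2 (\<beta> k \<sigma>))"
    have "0 < tr k \<sigma> (\<beta> k \<sigma>) ?\<sigma>" by (rule trans_pos_demand) (use \<open>dem \<sigma> \<and> _\<close> in simp)
    then show "\<exists>\<sigma>'. (dem \<sigma>' \<and> \<not> fst (own \<sigma>')) \<and> 0 < tr k \<sigma> (\<beta> k \<sigma>) \<sigma>'"
      using \<open>dem \<sigma> \<and> \<not> fst (own \<sigma>)\<close> \<open>\<not> buy1 (\<beta> k \<sigma>)\<close>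
      by (intro exI[of _ ?\<sigma>]) (simp add: dem_def own_def)
  qed
  then obtain k \<sigma>' where "late_start \<le> k" "reachable \<beta> k \<sigma>'" "buy1 (\<beta> k \<sigma>')" by blast
  then show ?thesis
    using price_finite_of_action(2)[OF fin, of k \<sigma>'] late_start_ge(2) by simp
qed

lemma bellman_base_le:
  assumes "\<beta> \<in> class_base m tau" "exp_payment m p tau \<beta> \<noteq> top" "late_start \<le> n" "reachable \<beta> n \<sigma>"
  shows "bellman \<beta> (net_gain p \<beta>) value_base n \<sigma> \<le> value_base n \<sigma>"
proof -
  have mn: "m \<le> n" using assms(3) late_start_ge(2) by linarith
  have "\<not> buy2 (\<beta> n \<sigma>)" using assms(1,4) mn unfolding class_base_def by blast
  then show ?thesis
    unfolding bellman_net_gain[of n p \<beta> \<sigma>, OF mn payment_finite_of_reachable[OF assms(2,4)]]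
    by (rule step_value_base_le[OF mn no_upgrade_in_class_base[OF assms(1,4)] _
          price_finite_of_action(1)[OF assms(2,4) mn]])
qed

lemma bellman_base_subscribe_then_buy:
  assumes "late_start \<le> n" "\<not> snd (own \<sigma>)" "dem \<sigma> \<Longrightarrow> fst (own \<sigma>) \<Longrightarrow> n3 < n"
    and pay: "payment m p n (splice late_start \<beta> subscribe_then_buy n \<sigma>) \<noteq> top"
  shows "bellman (splice late_start \<beta> subscribe_then_buy) (net_gain p (splice late_start \<beta> subscribe_then_buy))
      value_base n \<sigma> = value_base n \<sigma>"
proof -
  have mn: "m \<le> n" using assms(1) late_start_ge(2) by linarith
  have eq: "splice late_start \<beta> subscribe_then_buy n \<sigma> = subscribe_then_buy n \<sigma>"
    using assms(1) by (simp add: splice_def)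
  show ?thesis
    unfolding bellman_net_gain[of n p "splice late_start \<beta> subscribe_then_buy" \<sigma>, OF mn pay] eq
    by (rule step_value_base_subscribe_then_buy[OF mn assms(2,3)]) (use pay eq in \<open>auto simp: payment_def\<close>)
qed

lemma utility_le_splice_subscribe_then_buy:
  assumes \<beta>: "\<beta> \<in> class_base m tau"
  shows "utility m q1 q2 p tau \<beta> \<le> utility m q1 q2 p tau (splice late_start \<beta> subscribe_then_buy)"
proof (cases "exp_payment m p tau \<beta> = top")
  case fin: False
  define \<alpha> where "\<alpha> = splice late_start \<beta> subscribe_then_buy"
  have m_le: "m \<le> n" if "late_start \<le> n" for n using that late_start_ge(2) by linarith
  have fresh: "\<not> fst (own \<sigma>)" if "reachable \<beta> late_start \<sigma>" for \<sigma>
    using \<beta> that unfolding class_base_def tau_simps late_start_def by blast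
  have "admissible m \<beta>" using \<beta> unfolding class_base_def by blast
  then have \<alpha>: "\<alpha> \<in> class_base m tau"
    unfolding \<alpha>_def by (rule splice_subscribe_then_buy_in_class[OF _ fresh])
  have \<alpha>_late: "\<alpha> n \<sigma> = subscribe_then_buy n \<sigma>" if "late_start \<le> n" for n \<sigma>
    using that by (simp add: \<alpha>_def splice_def)
  obtain N where N: "late_start \<le> N" "\<And>n \<sigma>. N \<le> n \<Longrightarrow> reachable \<beta> n \<sigma> \<Longrightarrow> dem \<sigma> \<Longrightarrow> fst (own \<sigma>)"
    using class_base_owns_eventually[OF \<beta>] by blast
  have fin_\<alpha>: "payment m p n (\<alpha> n \<sigma>) \<noteq> top" if "late_start \<le> n" for n \<sigma>
  proof -
    have "n < n3 \<Longrightarrow> priceS p \<noteq> top" using less_n3_iff[OF m_le[OF that]] by (auto simp: defer_gain_def)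
    then show ?thesis using \<alpha>_late[OF that] base_price_finite[OF \<beta> fin] m_le[OF that]
      by (auto simp: subscribe_then_buy_def payment_def subs_def buy1_def buy2_def price1_def)
  qed
  have "utility m q1 q2 p tau \<beta> \<le> utility m q1 q2 p tau \<alpha>"
    unfolding \<alpha>_def
  proof (rule utility_le_splice[OF late_start_ge(1) fin, where \<Psi>=value_base
        and K="v * qual_bound / (1 - \<delta> * \<gamma>)"])
    show "bellman \<beta> (net_gain p \<beta>) value_base n \<sigma> \<le> value_base n \<sigma>"
      if "late_start \<le> n" "reachable \<beta> n \<sigma>" for n \<sigma>
      using bellman_base_le[OF \<beta> fin that] .
    show "\<forall>\<^sub>F n in sequentially. \<forall>\<sigma>. reachable \<beta> n \<sigma> \<longrightarrow> 0 \<le> value_base n \<sigma>"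
    proof (rule eventually_sequentiallyI[of N], intro allI impI)
      fix n \<sigma> assume "N \<le> n" "reachable \<beta> n \<sigma>"
      then show "0 \<le> value_base n \<sigma>" using value_base_bounds(1) N m_le by auto
    qed
    show "payment m p n (splice late_start \<beta> subscribe_then_buy n \<sigma>) \<noteq> top"
      if "late_start \<le> n" for n \<sigma>
      using fin_\<alpha>[OF that] by (simp add: \<alpha>_def)
    show "bellman (splice late_start \<beta> subscribe_then_buy) (net_gain p (splice late_start \<beta> subscribe_then_buy))
        value_base n \<sigma> = value_base n \<sigma>"
      if "late_start \<le> n" "reachable (splice late_start \<beta> subscribe_then_buy) n \<sigma>" for n \<sigma>
    proof (rule bellman_base_subscribe_then_buy[OF that(1)])
      show "\<not> snd (own \<sigma>)" using no_upgrade_in_class_base[OF \<alpha>] that(2) by (simp add: \<alpha>_def)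
      show "n3 < n" if "dem \<sigma>" "fst (own \<sigma>)"
        by (rule owner_after_n3[OF fresh \<open>late_start \<le> n\<close> \<open>reachable _ n \<sigma>\<close> that(2)])
      show "payment m p n (splice late_start \<beta> subscribe_then_buy n \<sigma>) \<noteq> top"
        using fin_\<alpha>[OF that(1)] by (simp add: \<alpha>_def)
    qed
    show "\<forall>\<^sub>F n in sequentially. \<forall>\<sigma>. reachable (splice late_start \<beta> subscribe_then_buy) n \<sigma> \<longrightarrow>
        0 \<le> value_base n \<sigma> \<and> value_base n \<sigma> \<le> v * qual_bound / (1 - \<delta> * \<gamma>) * \<gamma> ^ n"
    proof (rule eventually_sequentiallyI[of "Suc (max late_start n3)"], intro allI impI)
      fix n \<sigma> assume n: "Suc (max late_start n3) \<le> n" and r: "reachable (splice late_start \<beta> subscribe_then_buy) n \<sigma>"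
      have "dem \<sigma> \<Longrightarrow> fst (own \<sigma>)" using owns_base_after[OF _ r] n by (simp add: Suc_le_eq)
      then show "0 \<le> value_base n \<sigma> \<and> value_base n \<sigma> \<le> v * qual_bound / (1 - \<delta> * \<gamma>) * \<gamma> ^ n"
        using value_base_bounds[of n \<sigma>] m_le[of n] n by simp
    qed
  qed
  then show ?thesis by (simp add: \<alpha>_def)
qed (simp add: utility_def)

lemma optimal_base:
  "\<exists>\<alpha>. optimal_in (class_base m tau) (utility m q1 q2 p tau) \<alpha> \<and>
     (\<forall>n \<ge> m. \<forall>\<sigma>. reachable \<alpha> n \<sigma> \<longrightarrow> (subs (\<alpha> n \<sigma>) \<longleftrightarrow> n < n3 \<and> dem \<sigma>)) \<and>
     (\<forall>\<sigma>. reachable \<alpha> n3 \<sigma> \<longrightarrow> dem \<sigma> \<longrightarrow> buy1 (\<alpha> n3 \<sigma>))"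
proof -
  define idle :: strategy where "idle n \<sigma> = (False, False, False)" for n \<sigma>
  have "\<not> fst (own \<sigma>)" if "reachable idle n \<sigma>" for n \<sigma>
  proof (rule reachable_induct[where P="\<lambda>_ \<sigma>. \<not> fst (own \<sigma>)", OF that])
    show "\<not> fst (own \<sigma>')" if "0 < tr n \<sigma> (idle n \<sigma>) \<sigma>'" "\<not> fst (own \<sigma>)" for n \<sigma> \<sigma>'
      using trans_pos_own[OF that(1)] that(2) by (simp add: idle_def buy1_def)
  qed (simp add: own_def)
  then have "splice late_start idle subscribe_then_buy \<in> class_base m tau"
    by (intro splice_subscribe_then_buy_in_class) (auto simp: admissible_def idle_def buy2_def)
  then have "\<exists>\<beta>\<in>class_base m tau.
      optimal_in (class_base m tau) (utility m q1 q2 p tau) (splice late_start \<beta> subscribe_then_buy)"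
  proof (intro optimal_in_splice_exists)
    show "splice late_start \<beta> subscribe_then_buy \<in> class_base m tau" if "\<beta> \<in> class_base m tau" for \<beta>
    proof (rule splice_subscribe_then_buy_in_class)
      show "admissible m \<beta>" using that unfolding class_base_def by blast
      show "\<not> fst (own \<sigma>)" if "reachable \<beta> late_start \<sigma>" for \<sigma>
        using \<open>\<beta> \<in> class_base m tau\<close> that unfolding class_base_def tau_simps late_start_def by blast
    qed
  qed (auto intro: utility_le_splice_subscribe_then_buy)
  then obtain \<beta> where \<beta>: "\<beta> \<in> class_base m tau"
    and opt: "optimal_in (class_base m tau) (utility m q1 q2 p tau) (splice late_start \<beta> subscribe_then_buy)"
    by blast
  have fresh: "\<not> fst (own \<sigma>)" if "reachable \<beta> late_start \<sigma>" for \<sigma>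
    using \<beta> that unfolding class_base_def tau_simps late_start_def by blast
  define \<alpha> where "\<alpha> = splice late_start \<beta> subscribe_then_buy"
  have \<alpha>_late: "\<alpha> n \<sigma> = subscribe_then_buy n \<sigma>" if "m \<le> n" "reachable \<alpha> n \<sigma>" for n \<sigma>
    using late_start_le[OF that] by (simp add: \<alpha>_def splice_def)
  have "buy1 (\<alpha> n3 \<sigma>)" if "reachable \<alpha> n3 \<sigma>" "dem \<sigma>" for \<sigma>
  proof -
    have "\<not> fst (own \<sigma>)"
      using owner_after_n3[OF fresh late_start_le[OF n3_ge that(1)[unfolded \<alpha>_def]] that(1)[unfolded \<alpha>_def]]
      by blast
    then show ?thesis using \<alpha>_late[OF n3_ge that(1)] that(2) by (simp add: subscribe_then_buy_def buy1_def)
  qed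
  moreover have "subs (\<alpha> n \<sigma>) \<longleftrightarrow> n < n3 \<and> dem \<sigma>" if "m \<le> n" "reachable \<alpha> n \<sigma>" for n \<sigma>
    using \<alpha>_late[OF that] by (auto simp: subscribe_then_buy_def subs_def)
  ultimately show ?thesis using opt unfolding \<alpha>_def[symmetric] by blast
qed

end

theorem lemma2:
  fixes m nmax :: nat and q1 q2 vmax :: real and p :: prices
    and na :: nat and \<delta> \<gamma> v :: real and \<tau> :: utype
  assumes "1 \<le> m" and "1 \<le> nmax" and "0 < q1" and "0 < q2" and "0 < vmax"
    and "1 \<le> na" and "na \<le> nmax" and "0 < \<delta>" and "\<delta> < 1" and "0 < \<gamma>" and "\<gamma> < 1"
    and "0 \<le> v" and "v \<le> vmax"
    and \<tau>: "\<tau> = (na, \<delta>, \<gamma>, v)"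
  shows
    "(\<exists>\<alpha>. optimal_in (class_upgrade m \<tau>) (utility m q1 q2 p \<tau>) \<alpha> \<and>
         (\<forall>\<sigma>. reach m \<tau> \<alpha> (max na m) \<sigma> \<longrightarrow>
             buy2 (\<alpha> (max na m) \<sigma>) \<and> (fst (own \<sigma>) \<or> buy1 (\<alpha> (max na m) \<sigma>))) \<and>
         (\<forall>n \<ge> m. \<forall>\<sigma>. reach m \<tau> \<alpha> n \<sigma> \<longrightarrow> \<not> subs (\<alpha> n \<sigma>)))
   \<and> (\<forall>o'. class_nobuy m \<tau> o' \<noteq> {} \<longrightarrow>
       (\<exists>\<alpha>. optimal_in (class_nobuy m \<tau> o') (utility m q1 q2 p \<tau>) \<alpha> \<and>
         (\<forall>n \<ge> m. \<forall>\<sigma>. reach m \<tau> \<alpha> n \<sigma> \<longrightarrow>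
             (dem \<sigma> \<and> enat n < n2 m q1 q2 p \<tau> o' \<longrightarrow> subs (\<alpha> n \<sigma>)) \<and>
             (n2 m q1 q2 p \<tau> o' \<le> enat n \<longrightarrow> \<not> subs (\<alpha> n \<sigma>)))))
   \<and> ((\<exists>n. cond3 m q1 q2 p \<tau> n) \<longrightarrow>
       (\<exists>\<alpha>. optimal_in (class_base m \<tau>) (utility m q1 q2 p \<tau>) \<alpha> \<and>
         (let n3 = (LEAST n. cond3 m q1 q2 p \<tau> n) in
           (\<forall>n \<ge> m. \<forall>\<sigma>. reach m \<tau> \<alpha> n \<sigma> \<longrightarrow>
               (subs (\<alpha> n \<sigma>) \<longleftrightarrow> n < n3 \<and> dem \<sigma>)) \<and>
           (\<forall>\<sigma>. reach m \<tau> \<alpha> n3 \<sigma> \<longrightarrow> dem \<sigma> \<longrightarrow> buy1 (\<alpha> n3 \<sigma>)))))"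
proof -
  interpret user_model m q1 q2 \<delta> \<gamma> v na
    by unfold_locales (use assms in auto)
  have base: "\<exists>\<alpha>. optimal_in (class_base m tau) (utility m q1 q2 p tau) \<alpha> \<and>
      (let n3 = (LEAST n. cond3 m q1 q2 p tau n) in
        (\<forall>n \<ge> m. \<forall>\<sigma>. reachable \<alpha> n \<sigma> \<longrightarrow> (subs (\<alpha> n \<sigma>) \<longleftrightarrow> n < n3 \<and> dem \<sigma>)) \<and>
        (\<forall>\<sigma>. reachable \<alpha> n3 \<sigma> \<longrightarrow> dem \<sigma> \<longrightarrow> buy1 (\<alpha> n3 \<sigma>)))"
    if "\<exists>n. cond3 m q1 q2 p tau n"
  proof -
    interpret base_buyer m q1 q2 \<delta> \<gamma> v na p by unfold_locales (rule that)
    show ?thesis using optimal_base unfolding Let_def n3_def .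
  qed
  show ?thesis unfolding \<tau> using optimal_upgrade[of p] optimal_nobuy[of _ p] base by blast
qed

end
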